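(* Let $G=(V,E)$ be a connected graph, let $T$ be a spanning tree of $G$ rooted in $s$ which is an $\mathcal L$-tree of LexDFS on $G$, and let $\sigma$ be a vertex order of $G$ starting at $s$ whose $\mathcal L$-tree is $T$. Then Ordering$(G,T,s,\sigma^-)$ outputs $\sigma$ if and only if $\sigma$ is a LexDFS order of $G$.
   Context: Graphs are finite, simple, undirected; $N(v)$ is the neighborhood of $v$. A vertex order is a linear order $\sigma=(v_1,\dots,v_n)$ of $V$; $\sigma(i)=v_i$; $u\prec_\sigma v$ means $u$ appears before $v$; $\sigma^-$ is the reverse order. DFS: a search that starts at a vertex and repeatedly visits an unvisited neighbor of the most recently visited vertex that still has an unvisited neighbor. DFS$^+(\tau)$ on a graph $H$: the DFS of $H$ starting at the last vertex of $\tau$ that, whenever several vertices may be visited next, visits the one rightmost in $\tau$. LexDFS started at $s$: label $s$ with $(0)$, all others with the empty label; for $i=1,\dots,n$ pick an unnumbered vertex $v$ with lexicographically largest label, set $\sigma(i)=v$, prepend $i$ to the label of each unnumbered neighbor of $v$; a LexDFS order is any possible output. $\mathcal L$-tree of a vertex order $(v_1,\dots,v_n)$: the spanning tree rooted at $v_1$ with an edge from each $v_i$ ($i>1$) to its rightmost neighbor $v_j$ with $j<i$; a rooted spanning tree $T$ (root $s$) is an $\mathcal L$-tree of LexDFS on $G$ if some LexDFS order of $G$ starting at $s$ has $\mathcal L$-tree $T$. Refining an ordered partition $(Q_1,\dots,Q_k)$ of $V$ with $S'$ replaces each $Q_i$ by $(Q_i\cap S',Q_i\setminus S')$ whenever both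 are nonempty. Procedure Ordering$(G,T,s,\rho)$ (for $\rho$ ending with $s$): let $\beta$ be the reverse of a BFS order of $T$ starting at $s$; $\mathcal Q=(V)$; for $i=1,\dots,n$, with $v=\beta(i)$, refine $\mathcal Q$ with $\{w\in N(v): w\prec_\beta v\}$; order the vertices inside each class of $\mathcal Q$ according to $\rho^-$ and move $\{s\}$ to the leftmost position; let $\tau$ be the reverse of the resulting order of all vertices; output DFS$^+(\tau)$ on $T$. *)

theory Defs
  imports Main
begin

definition simple_graph :: "'a set \<Rightarrow> ('a \<Rightarrow> 'a \<Rightarrow> bool) \<Rightarrow> bool" where
  "simple_graph V E \<longleftrightarrow> finite V \<and> (\<forall>x y. E x y \<longrightarrow> E y x) \<and> (\<forall>x. \<not> E x x)
     \<and> (\<forall>x y. E x y \<longrightarrow> x \<in> V \<and> y \<in> V)"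

definition connected_graph :: "'a set \<Rightarrow> ('a \<Rightarrow> 'a \<Rightarrow> bool) \<Rightarrow> bool" where
  "connected_graph V E \<longleftrightarrow> V \<noteq> {} \<and> (\<forall>x\<in>V. \<forall>y\<in>V. E\<^sup>*\<^sup>* x y)"

definition edge_set :: "('a \<Rightarrow> 'a \<Rightarrow> bool) \<Rightarrow> 'a set set" where
  "edge_set E = {{x, y} | x y. E x y}"

definition spanning_tree :: "'a set \<Rightarrow> ('a \<Rightarrow> 'a \<Rightarrow> bool) \<Rightarrow> ('a \<Rightarrow> 'a \<Rightarrow> bool) \<Rightarrow> bool" where
  "spanning_tree V E T \<longleftrightarrow> simple_graph V T \<and> (\<forall>x y. T x y \<longrightarrow> E x y)
     \<and> connected_graph V T \<and> card (edge_set T) = card V - 1"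

definition vertex_order :: "'a set \<Rightarrow> 'a list \<Rightarrow> bool" where
  "vertex_order V \<sigma> \<longleftrightarrow> distinct \<sigma> \<and> set \<sigma> = V"

definition prec :: "'a list \<Rightarrow> 'a \<Rightarrow> 'a \<Rightarrow> bool" where
  "prec \<sigma> u v \<longleftrightarrow> (\<exists>i j. i < j \<and> j < length \<sigma> \<and> \<sigma> ! i = u \<and> \<sigma> ! j = v)"

text \<open>Label of vertex v after the first i vertices (positions 0..i-1, numbered 1..i)
of \<sigma> have been numbered: the numbers of the numbered neighbours, most recent first,
followed by 0 if v is the start vertex.\<close>
definition lexdfs_label :: "('a \<Rightarrow> 'a \<Rightarrow> bool) \<Rightarrow> 'a \<Rightarrow> 'a list \<Rightarrow> nat \<Rightarrow> 'a \<Rightarrow> nat list" where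
  "lexdfs_label E s \<sigma> i v =
     map Suc (filter (\<lambda>j. E (\<sigma> ! j) v) (rev [0..<i])) @ (if v = s then [0] else [])"

text \<open>Strict lexicographic order on labels (a proper prefix is smaller).\<close>
definition label_less :: "nat list \<Rightarrow> nat list \<Rightarrow> bool" where
  "label_less l1 l2 \<longleftrightarrow> (l1, l2) \<in> lexord {(a, b). a < b}"

definition is_lexdfs_order :: "'a set \<Rightarrow> ('a \<Rightarrow> 'a \<Rightarrow> bool) \<Rightarrow> 'a \<Rightarrow> 'a list \<Rightarrow> bool" where
  "is_lexdfs_order V E s \<sigma> \<longleftrightarrow> vertex_order V \<sigma> \<and>
     (\<forall>i < length \<sigma>. \<forall>w \<in> V - set (take (Suc i) \<sigma>).
        \<not> label_less (lexdfs_label E s \<sigma> i (\<sigma> ! i)) (lexdfs_label E s \<sigma> i w))"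

definition ltree :: "('a \<Rightarrow> 'a \<Rightarrow> bool) \<Rightarrow> 'a list \<Rightarrow> 'a \<Rightarrow> 'a \<Rightarrow> bool" where
  "ltree E \<sigma> x y \<longleftrightarrow> (\<exists>i < length \<sigma>. \<exists>j < i.
      ((x = \<sigma> ! i \<and> y = \<sigma> ! j) \<or> (x = \<sigma> ! j \<and> y = \<sigma> ! i)) \<and> E (\<sigma> ! i) (\<sigma> ! j)
      \<and> (\<forall>k. j < k \<and> k < i \<longrightarrow> \<not> E (\<sigma> ! i) (\<sigma> ! k)))"

text \<open>Generic (queue-based) BFS from s: state = (visited order, queue).\<close>
inductive bfs_run :: "('a \<Rightarrow> 'a \<Rightarrow> bool) \<Rightarrow> 'a \<Rightarrow> 'a list \<Rightarrow> 'a list \<Rightarrow> bool"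
  for H s where
  start: "bfs_run H s [s] [s]"
| step: "bfs_run H s vis (u # q) \<Longrightarrow> distinct ns \<Longrightarrow>
         set ns = {w. H u w \<and> w \<notin> set vis} \<Longrightarrow> bfs_run H s (vis @ ns) (q @ ns)"

definition bfs_order :: "('a \<Rightarrow> 'a \<Rightarrow> bool) \<Rightarrow> 'a \<Rightarrow> 'a list \<Rightarrow> bool" where
  "bfs_order H s \<beta> \<longleftrightarrow> bfs_run H s \<beta> []"

text \<open>DFS^+(\<tau>) on H: start at the last vertex of \<tau>; repeatedly take the most recently
visited vertex that still has an unvisited neighbour and visit its unvisited neighbour
that is rightmost in \<tau>.\<close>
definition has_unvisited :: "('a \<Rightarrow> 'a \<Rightarrow> bool) \<Rightarrow> 'a list \<Rightarrow> 'a \<Rightarrow> bool" where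
  "has_unvisited H vis u \<longleftrightarrow> (\<exists>w. H u w \<and> w \<notin> set vis)"

inductive dfs_plus_run :: "('a \<Rightarrow> 'a \<Rightarrow> bool) \<Rightarrow> 'a list \<Rightarrow> 'a list \<Rightarrow> bool"
  for H \<tau> where
  start: "\<tau> \<noteq> [] \<Longrightarrow> dfs_plus_run H \<tau> [last \<tau>]"
| step: "dfs_plus_run H \<tau> vis \<Longrightarrow> i < length vis \<Longrightarrow> has_unvisited H vis (vis ! i) \<Longrightarrow>
         (\<forall>k. i < k \<and> k < length vis \<longrightarrow> \<not> has_unvisited H vis (vis ! k)) \<Longrightarrow>
         H (vis ! i) w \<Longrightarrow> w \<notin> set vis \<Longrightarrow>
         (\<forall>w'. H (vis ! i) w' \<and> w' \<notin> set vis \<longrightarrow> w' = w \<or> prec \<tau> w' w) \<Longrightarrow>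
         dfs_plus_run H \<tau> (vis @ [w])"

definition dfs_plus_output :: "('a \<Rightarrow> 'a \<Rightarrow> bool) \<Rightarrow> 'a list \<Rightarrow> 'a list \<Rightarrow> bool" where
  "dfs_plus_output H \<tau> out \<longleftrightarrow> dfs_plus_run H \<tau> out \<and> (\<forall>u \<in> set out. \<not> has_unvisited H out u)"

definition refine :: "'a set list \<Rightarrow> 'a set \<Rightarrow> 'a set list" where
  "refine Q S = concat (map (\<lambda>X. if X \<inter> S \<noteq> {} \<and> X - S \<noteq> {} then [X \<inter> S, X - S] else [X]) Q)"

text \<open>The order \<tau> computed by Ordering(G,T,s,\<rho>) for a given choice \<beta> of reversed BFS order.\<close>
definition ordering_tau :: "'a set \<Rightarrow> ('a \<Rightarrow> 'a \<Rightarrow> bool) \<Rightarrow> 'a \<Rightarrow> 'a list \<Rightarrow> 'a list \<Rightarrow> 'a list" where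
  "ordering_tau V E s \<rho> \<beta> =
     (let Q = fold (\<lambda>v Q. refine Q {w. E v w \<and> prec \<beta> w v}) \<beta> [V];
          L = concat (map (\<lambda>X. filter (\<lambda>x. x \<in> X) (rev \<rho>)) Q)
      in rev (s # removeAll s L))"

definition ordering_outputs :: "'a set \<Rightarrow> ('a \<Rightarrow> 'a \<Rightarrow> bool) \<Rightarrow> ('a \<Rightarrow> 'a \<Rightarrow> bool) \<Rightarrow> 'a \<Rightarrow> 'a list
     \<Rightarrow> 'a list \<Rightarrow> 'a list \<Rightarrow> bool" where
  "ordering_outputs V E T s \<rho> bfs out \<longleftrightarrow>
     dfs_plus_output T (ordering_tau V E s \<rho> (rev bfs)) out"

end

theory Submission
  imports Defs
begin

text \<open>
  Since \<open>T\<close> is the L-tree of a LexDFS order, it is a normal tree: every edge of \<open>G\<close> joins an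
  ancestor and a descendant, and \<open>\<sigma>\<close> and that LexDFS order induce the same parent relation on \<open>T\<close>.
  Along a normal tree, the LexDFS labels of two vertices compare like their adjacencies to the
  ancestors of the earlier one, read from the deepest ancestor upwards, and the partition refinement
  of Ordering sorts siblings by exactly this comparison. Hence DFS\<open>\<^sup>+\<close> on \<open>T\<close> reproduces \<open>\<sigma>\<close> step
  by step iff at each step \<open>\<sigma>\<close> backtracks to the parent of its next vertex and takes the child that
  LexDFS would take, and these two conditions together amount to the LexDFS condition for \<open>\<sigma>\<close>.
\<close>

section \<open>Positions in lists\<close>

lemma prec_Nil [simp]: "\<not> prec [] a b"
  by (simp add: prec_def)

lemma prec_Cons: "prec (x # xs) a b \<longleftrightarrow> (x = a \<and> b \<in> set xs) \<or> prec xs a b"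
proof
  assume "prec (x # xs) a b"
  then obtain i j where ij: "i < j" "j < length (x # xs)" "(x # xs) ! i = a" "(x # xs) ! j = b"
    unfolding prec_def by blast
  then obtain j' where j': "j = Suc j'" by (cases j) auto
  show "(x = a \<and> b \<in> set xs) \<or> prec xs a b"
  proof (cases i)
    case 0
    then show ?thesis using ij j' by auto
  next
    case (Suc i')
    then have "prec xs a b" using ij j' unfolding prec_def by (intro exI[of _ i'] exI[of _ j']) auto
    then show ?thesis by blast
  qed
next
  assume "(x = a \<and> b \<in> set xs) \<or> prec xs a b"
  then show "prec (x # xs) a b"
  proof
    assume "x = a \<and> b \<in> set xs"
    then obtain j where "j < length xs" "xs ! j = b" "x = a" by (auto simp: in_set_conv_nth)
    then show ?thesis unfolding prec_def by (intro exI[of _ 0] exI[of _ "Suc j"]) auto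
  next
    assume "prec xs a b"
    then obtain i j where "i < j" "j < length xs" "xs ! i = a" "xs ! j = b" unfolding prec_def by blast
    then show ?thesis unfolding prec_def by (intro exI[of _ "Suc i"] exI[of _ "Suc j"]) auto
  qed
qed

lemma prec_append: "prec (xs @ ys) a b \<longleftrightarrow> prec xs a b \<or> prec ys a b \<or> (a \<in> set xs \<and> b \<in> set ys)"
  by (induction xs) (auto simp: prec_Cons)

lemma prec_rev: "prec (rev xs) a b \<longleftrightarrow> prec xs b a"
  by (induction xs) (auto simp: prec_Cons prec_append)

lemma prec_filter: "prec (filter P xs) a b \<longleftrightarrow> P a \<and> P b \<and> prec xs a b"
  by (induction xs) (auto simp: prec_Cons)

lemma prec_memD: "prec xs a b \<Longrightarrow> a \<in> set xs \<and> b \<in> set xs"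
  unfolding prec_def by auto

lemma prec_nth_iff:
  assumes "distinct xs" "i < length xs" "j < length xs"
  shows "prec xs (xs ! i) (xs ! j) \<longleftrightarrow> i < j"
  using assms unfolding prec_def by (metis nth_eq_iff_index_eq order.strict_trans)

lemma prec_trans:
  assumes "distinct xs" "prec xs a b" "prec xs b c"
  shows "prec xs a c"
proof -
  obtain i j where "i < j" "j < length xs" "xs ! i = a" "xs ! j = b"
    using assms(2) unfolding prec_def by blast
  moreover obtain j' k where "j' < k" "k < length xs" "xs ! j' = b" "xs ! k = c"
    using assms(3) unfolding prec_def by blast
  ultimately have "j' = j" "i < k"
    using nth_eq_iff_index_eq[OF assms(1), of j' j] by auto
  then show ?thesis unfolding prec_def using \<open>xs ! i = a\<close> \<open>k < length xs\<close> \<open>xs ! k = c\<close> by blast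
qed

lemma prec_irrefl: "distinct xs \<Longrightarrow> \<not> prec xs a a"
  unfolding prec_def using nth_eq_iff_index_eq by fastforce

lemma prec_asym: "distinct xs \<Longrightarrow> prec xs a b \<Longrightarrow> \<not> prec xs b a"
  using prec_irrefl prec_trans by metis

lemma prec_total:
  assumes "a \<in> set xs" "b \<in> set xs" "a \<noteq> b"
  shows "prec xs a b \<or> prec xs b a"
proof -
  obtain i j where "i < length xs" "xs ! i = a" "j < length xs" "xs ! j = b"
    using assms(1,2) by (auto simp: in_set_conv_nth)
  moreover from this assms(3) consider "i < j" | "j < i" by fastforce
  ultimately show ?thesis unfolding prec_def by metis
qed

lemma tranclp_prec:
  assumes "R\<^sup>+\<^sup>+ a b" "distinct xs" "\<And>u v. R u v \<Longrightarrow> prec xs u v"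
  shows "prec xs a b"
  using assms(1)
proof induction
  case (step b c)
  then show ?case using assms(2,3) prec_trans by metis
qed (use assms(3) in blast)

lemma nth_in_set_take_iff: "distinct xs \<Longrightarrow> i < length xs \<Longrightarrow> xs ! i \<in> set (take k xs) \<longleftrightarrow> i < k"
  by (auto simp: in_set_conv_nth nth_eq_iff_index_eq)

section \<open>LexDFS labels and orders\<close>

lemma lexord_map_filter_iff:
  fixes f :: "'b::linorder \<Rightarrow> 'c::linorder"
  assumes "strict_mono f" "sorted_wrt (>) ns"
  shows "(map f (filter M1 ns), map f (filter M2 ns)) \<in> lexord {(a, b). a < b} \<longleftrightarrow>
         (\<exists>t\<in>set ns. M2 t \<and> \<not> M1 t \<and> (\<forall>t'\<in>set ns. t < t' \<longrightarrow> (M1 t' \<longleftrightarrow> M2 t')))"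
  using assms(2)
proof (induction ns)
  case (Cons x ns)
  have below: "\<forall>y\<in>set ns. y < x" and "sorted_wrt (>) ns" using Cons.prems by auto
  note IH = Cons.IH[OF this(2)]
  have small: "\<forall>c\<in>set (map f (filter M ns)). c < f x" for M
    using below strict_monoD[OF assms(1)] by auto
  consider "M1 x = M2 x" | "M1 x" "\<not> M2 x" | "\<not> M1 x" "M2 x" by blast
  then show ?case
  proof cases
    case 1
    then show ?thesis using IH below by (cases "M1 x") auto
  next
    case 2
    have "(f x # map f (filter M1 ns), map f (filter M2 ns)) \<notin> lexord {(a, b). a < b}"
      using small[of M2] by (cases "map f (filter M2 ns)") auto
    then show ?thesis using 2 below by auto
  next
    case 3
    have "(map f (filter M1 ns), f x # map f (filter M2 ns)) \<in> lexord {(a, b). a < b}"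
      using small[of M1] by (cases "map f (filter M1 ns)") auto
    then show ?thesis using 3 below by auto
  qed
qed simp

lemma label_less_lexdfs_label_iff:
  assumes "x \<noteq> s" "w \<noteq> s"
  shows "label_less (lexdfs_label E s \<rho> i x) (lexdfs_label E s \<rho> i w) \<longleftrightarrow>
    (\<exists>t<i. E (\<rho> ! t) w \<and> \<not> E (\<rho> ! t) x \<and>
       (\<forall>t'. t < t' \<and> t' < i \<longrightarrow> (E (\<rho> ! t') x \<longleftrightarrow> E (\<rho> ! t') w)))"
proof -
  have "strict_mono Suc" "sorted_wrt (>) (rev [0..<i])"
    by (auto simp: strict_mono_def sorted_wrt_rev)
  from lexord_map_filter_iff[OF this] show ?thesis
    using assms by (auto simp: lexdfs_label_def label_less_def)
qed

lemma lexdfs_order_label_not_less: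
  assumes "is_lexdfs_order V E s \<rho>" "i < k" "k < length \<rho>"
  shows "\<not> label_less (lexdfs_label E s \<rho> i (\<rho> ! i)) (lexdfs_label E s \<rho> i (\<rho> ! k))"
proof -
  have "distinct \<rho>" "set \<rho> = V"
    using assms(1) unfolding is_lexdfs_order_def vertex_order_def by auto
  then have "\<rho> ! k \<in> V - set (take (Suc i) \<rho>)"
    using assms(2,3) nth_in_set_take_iff by fastforce
  then show ?thesis using assms unfolding is_lexdfs_order_def by auto
qed

lemma lexdfs_order_nth_neq_start:
  assumes "is_lexdfs_order V E s \<rho>" "0 < k" "k < length \<rho>"
  shows "\<rho> ! k \<noteq> s"
proof
  assume "\<rho> ! k = s"
  moreover have "distinct \<rho>" using assms(1) unfolding is_lexdfs_order_def vertex_order_def by auto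
  moreover have "0 < length \<rho>" using assms(3) by linarith
  ultimately have "\<rho> ! 0 \<noteq> s" using assms(2,3) nth_eq_iff_index_eq[of \<rho> 0 k] by auto
  then have "lexdfs_label E s \<rho> 0 (\<rho> ! 0) = []" "lexdfs_label E s \<rho> 0 (\<rho> ! k) = [0]"
    using \<open>\<rho> ! k = s\<close> by (auto simp: lexdfs_label_def)
  then show False
    using lexdfs_order_label_not_less[OF assms(1,2,3)] by (simp add: label_less_def)
qed

lemma lexdfs_order_hd:
  assumes "is_lexdfs_order V E s \<rho>" "s \<in> V"
  shows "hd \<rho> = s"
proof -
  obtain k where "k < length \<rho>" "\<rho> ! k = s"
    using assms unfolding is_lexdfs_order_def vertex_order_def by (metis in_set_conv_nth)
  then show ?thesis
    using lexdfs_order_nth_neq_start[OF assms(1)] by (metis gr0I hd_conv_nth length_0_conv not_less0)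
qed

lemma lexdfs_order_four_point:
  assumes "is_lexdfs_order V E s \<rho>" "0 < i" "i < k" "k < length \<rho>"
    and "t < i" "E (\<rho> ! t) (\<rho> ! k)" "\<not> E (\<rho> ! t) (\<rho> ! i)"
  obtains t' where "t < t'" "t' < i" "E (\<rho> ! t') (\<rho> ! i)" "\<not> E (\<rho> ! t') (\<rho> ! k)"
proof -
  let ?differ = "\<lambda>t'. E (\<rho> ! t') (\<rho> ! i) \<noteq> E (\<rho> ! t') (\<rho> ! k)"
  define D where "D = {t'. t \<le> t' \<and> t' < i \<and> ?differ t'}"
  define m where "m = Max D"
  have "t \<in> D" using assms(5-7) unfolding D_def by simp
  moreover have "finite D" unfolding D_def by (rule finite_subset[of _ "{..<i}"]) auto
  ultimately have "m \<in> D" and above: "\<And>t'. t' \<in> D \<Longrightarrow> t' \<le> m"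
    unfolding m_def using Max_in Max_ge by blast+
  have agree: "\<forall>t'. m < t' \<and> t' < i \<longrightarrow> (E (\<rho> ! t') (\<rho> ! i) \<longleftrightarrow> E (\<rho> ! t') (\<rho> ! k))"
  proof (intro allI impI)
    fix t' assume t': "m < t' \<and> t' < i"
    then have "t' \<notin> D" using above[of t'] by auto
    moreover have "t \<le> m" using \<open>m \<in> D\<close> unfolding D_def by simp
    ultimately show "E (\<rho> ! t') (\<rho> ! i) \<longleftrightarrow> E (\<rho> ! t') (\<rho> ! k)" using t' unfolding D_def by auto
  qed
  have "\<rho> ! i \<noteq> s" "\<rho> ! k \<noteq> s"
    using lexdfs_order_nth_neq_start[OF assms(1)] assms(2-4) by auto
  with lexdfs_order_label_not_less[OF assms(1,3,4)]
  have no_witness: "\<not> (\<exists>t0<i. E (\<rho> ! t0) (\<rho> ! k) \<and> \<not> E (\<rho> ! t0) (\<rho> ! i) \<and>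
      (\<forall>t'. t0 < t' \<and> t' < i \<longrightarrow> (E (\<rho> ! t') (\<rho> ! i) \<longleftrightarrow> E (\<rho> ! t') (\<rho> ! k))))"
    by (simp add: label_less_lexdfs_label_iff)
  have "m < i" using \<open>m \<in> D\<close> unfolding D_def by simp
  then have "\<not> (E (\<rho> ! m) (\<rho> ! k) \<and> \<not> E (\<rho> ! m) (\<rho> ! i))"
    using no_witness agree by blast
  then have "E (\<rho> ! m) (\<rho> ! i)" "\<not> E (\<rho> ! m) (\<rho> ! k)" "t < m" "m < i"
    using \<open>m \<in> D\<close> assms(6,7) unfolding D_def by (auto simp: le_less)
  then show ?thesis using that by blast
qed

lemma is_lexdfs_orderI:
  assumes "vertex_order V \<rho>" "hd \<rho> = s"
    and "\<And>i k. 0 < i \<Longrightarrow> i < k \<Longrightarrow> k < length \<rho> \<Longrightarrow>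
      \<not> label_less (lexdfs_label E s \<rho> i (\<rho> ! i)) (lexdfs_label E s \<rho> i (\<rho> ! k))"
  shows "is_lexdfs_order V E s \<rho>"
  unfolding is_lexdfs_order_def
proof (intro conjI assms(1) allI impI ballI)
  fix i w
  assume i: "i < length \<rho>" and w: "w \<in> V - set (take (Suc i) \<rho>)"
  have "distinct \<rho>" "set \<rho> = V" using assms(1) unfolding vertex_order_def by auto
  then obtain k where k: "k < length \<rho>" "\<rho> ! k = w" "i < k"
    using w nth_in_set_take_iff by (metis DiffE in_set_conv_nth not_less_eq)
  show "\<not> label_less (lexdfs_label E s \<rho> i (\<rho> ! i)) (lexdfs_label E s \<rho> i w)"
  proof (cases "i = 0")
    case True
    have "\<rho> ! 0 = s" using assms(2) k(1) hd_conv_nth[of \<rho>] by fastforce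
    moreover have "0 < length \<rho>" using k(1) by (cases \<rho>) auto
    then have "w \<noteq> \<rho> ! 0"
      using \<open>distinct \<rho>\<close> k nth_eq_iff_index_eq[of \<rho> k 0] by auto
    ultimately show ?thesis using True by (simp add: lexdfs_label_def label_less_def)
  qed (use assms(3) k in auto)
qed

section \<open>Forests and normal forests\<close>

locale parent_forest =
  fixes P :: "'a \<Rightarrow> 'a \<Rightarrow> bool"
  assumes finite_parent: "finite {(u, v). P u v}"
    and parent_unique: "P u v \<Longrightarrow> P u' v \<Longrightarrow> u = u'"
    and ancestor_irrefl: "\<not> P\<^sup>+\<^sup>+ a a"
begin

lemma ancestor_asym: "P\<^sup>+\<^sup>+ a b \<Longrightarrow> \<not> P\<^sup>+\<^sup>+ b a"
  using ancestor_irrefl tranclp_trans by metis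

lemma ancestor_of_child_iff: "P p x \<Longrightarrow> P\<^sup>+\<^sup>+ a x \<longleftrightarrow> a = p \<or> P\<^sup>+\<^sup>+ a p"
  by (metis parent_unique tranclp.simps)

lemma ancestors_chain: "P\<^sup>+\<^sup>+ a x \<Longrightarrow> P\<^sup>+\<^sup>+ b x \<Longrightarrow> a = b \<or> P\<^sup>+\<^sup>+ a b \<or> P\<^sup>+\<^sup>+ b a"
proof (induction arbitrary: b rule: tranclp_induct)
  case (base y)
  from base.prems show ?case unfolding ancestor_of_child_iff[OF base.hyps] by blast
next
  case (step y z)
  from step.prems have "b = y \<or> P\<^sup>+\<^sup>+ b y" unfolding ancestor_of_child_iff[OF step.hyps(2)] .
  then show ?case using step by blast
qed

lemma ancestor_through_child:
  assumes "P p c" "P\<^sup>*\<^sup>* c w" "P\<^sup>+\<^sup>+ a w" "a \<noteq> c" "\<not> P\<^sup>+\<^sup>+ c a"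
  shows "a = p \<or> P\<^sup>+\<^sup>+ a p"
proof -
  have "P\<^sup>+\<^sup>+ a c"
  proof (cases "c = w")
    case True
    then show ?thesis using assms(3) by simp
  next
    case False
    then have "P\<^sup>+\<^sup>+ c w" using rtranclpD[OF assms(2)] by blast
    from ancestors_chain[OF assms(3) this] show ?thesis using assms(4,5) by blast
  qed
  then show ?thesis unfolding ancestor_of_child_iff[OF assms(1)] .
qed

lemma finite_ancestors: "finite {a. P\<^sup>+\<^sup>+ a x}"
proof (rule finite_subset)
  show "{a. P\<^sup>+\<^sup>+ a x} \<subseteq> fst ` {(u, v). P u v}" by (force dest: tranclpD)
qed (use finite_parent in simp)

definition parent_first :: "'a list \<Rightarrow> bool" where
  "parent_first \<rho> \<longleftrightarrow> distinct \<rho> \<and> (\<forall>u v. P u v \<longrightarrow> prec \<rho> u v)"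

lemma parent_first_ancestor_prec: "parent_first \<rho> \<Longrightarrow> P\<^sup>+\<^sup>+ a b \<Longrightarrow> prec \<rho> a b"
  unfolding parent_first_def using tranclp_prec by metis

lemma parent_first_ancestor_nth:
  "parent_first \<rho> \<Longrightarrow> i < length \<rho> \<Longrightarrow> j < length \<rho> \<Longrightarrow> P\<^sup>+\<^sup>+ (\<rho> ! i) (\<rho> ! j) \<Longrightarrow> i < j"
  using parent_first_ancestor_prec prec_nth_iff parent_first_def by metis

lemma parent_first_ancestor_index:
  assumes "parent_first \<rho>" "k < length \<rho>" "P\<^sup>+\<^sup>+ a (\<rho> ! k)"
  obtains t where "t < k" "\<rho> ! t = a"
proof -
  have "a \<in> set \<rho>" using prec_memD[OF parent_first_ancestor_prec[OF assms(1,3)]] by blast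
  then obtain t where "t < length \<rho>" "\<rho> ! t = a" by (auto simp: in_set_conv_nth)
  moreover from this have "t < k" using parent_first_ancestor_nth[OF assms(1), of t k] assms(2,3) by simp
  ultimately show ?thesis using that by blast
qed

text \<open>\<open>X\<close> precedes \<open>Y\<close> in the lexicographic order of their restrictions to the ancestors of \<open>x\<close>,
  read from \<open>x\<close> towards the root; this is how LexDFS labels compare along a normal tree.\<close>
definition anc_lex_less :: "'a \<Rightarrow> ('a \<Rightarrow> bool) \<Rightarrow> ('a \<Rightarrow> bool) \<Rightarrow> bool" where
  "anc_lex_less x X Y \<longleftrightarrow>
     (\<exists>a. P\<^sup>+\<^sup>+ a x \<and> Y a \<and> \<not> X a \<and> (\<forall>a'. P\<^sup>+\<^sup>+ a a' \<longrightarrow> P\<^sup>+\<^sup>+ a' x \<longrightarrow> (X a' \<longleftrightarrow> Y a')))"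

lemma anc_lex_less_asym: "anc_lex_less x X Y \<Longrightarrow> \<not> anc_lex_less x Y X"
proof
  assume "anc_lex_less x X Y" "anc_lex_less x Y X"
  then obtain a b where
    a: "P\<^sup>+\<^sup>+ a x" "Y a" "\<not> X a" "\<forall>a'. P\<^sup>+\<^sup>+ a a' \<longrightarrow> P\<^sup>+\<^sup>+ a' x \<longrightarrow> (X a' \<longleftrightarrow> Y a')" and
    b: "P\<^sup>+\<^sup>+ b x" "X b" "\<not> Y b" "\<forall>a'. P\<^sup>+\<^sup>+ b a' \<longrightarrow> P\<^sup>+\<^sup>+ a' x \<longrightarrow> (Y a' \<longleftrightarrow> X a')"
    unfolding anc_lex_less_def by blast
  from ancestors_chain[OF a(1) b(1)] show False
    using a b by blast
qed

lemma anc_lex_less_siblings: "P p x \<Longrightarrow> P p y \<Longrightarrow> anc_lex_less x = anc_lex_less y"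
proof -
  assume "P p x" "P p y"
  then have "P\<^sup>+\<^sup>+ a x \<longleftrightarrow> P\<^sup>+\<^sup>+ a y" for a using ancestor_of_child_iff by blast
  then show ?thesis by (intro ext) (simp add: anc_lex_less_def)
qed

text \<open>The comparison is decided at the deepest ancestor where \<open>X\<close>, \<open>Y\<close>, \<open>Z\<close> do not all agree.\<close>
lemma not_anc_lex_less_trans:
  assumes "\<not> anc_lex_less x X Y" "\<not> anc_lex_less x Y Z"
  shows "\<not> anc_lex_less x X Z"
proof
  assume "anc_lex_less x X Z"
  then obtain a where a: "P\<^sup>+\<^sup>+ a x" "Z a" "\<not> X a"
    "\<forall>a'. P\<^sup>+\<^sup>+ a a' \<longrightarrow> P\<^sup>+\<^sup>+ a' x \<longrightarrow> (X a' \<longleftrightarrow> Z a')"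
    unfolding anc_lex_less_def by blast
  let ?bad = "\<lambda>b. (b = a \<or> P\<^sup>+\<^sup>+ a b) \<and> \<not> ((X b \<longleftrightarrow> Y b) \<and> (Y b \<longleftrightarrow> Z b))"
  have "asymp_on {b. P\<^sup>+\<^sup>+ b x} P\<^sup>+\<^sup>+" "transp_on {b. P\<^sup>+\<^sup>+ b x} P\<^sup>+\<^sup>+"
    using ancestor_asym by (auto intro: asymp_onI transp_onI tranclp_trans)
  from Finite_Set.bex_max_element_with_property[OF finite_ancestors this, of ?bad]
  obtain b where b: "P\<^sup>+\<^sup>+ b x" "?bad b" and deepest: "\<forall>b'. P\<^sup>+\<^sup>+ b' x \<longrightarrow> P\<^sup>+\<^sup>+ b b' \<longrightarrow> \<not> ?bad b'"
    using a by auto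
  have agree: "\<forall>a'. P\<^sup>+\<^sup>+ b a' \<longrightarrow> P\<^sup>+\<^sup>+ a' x \<longrightarrow> (X a' \<longleftrightarrow> Y a') \<and> (Y a' \<longleftrightarrow> Z a')"
    using deepest b(2) by (metis tranclp_trans)
  have "\<not> X b \<and> Z b \<or> (X b \<longleftrightarrow> Z b)" using a b by blast
  then show False
    using assms agree b unfolding anc_lex_less_def by (cases "Y b") blast+
qed

end

locale normal_forest = parent_forest P for P :: "'a \<Rightarrow> 'a \<Rightarrow> bool" +
  fixes E :: "'a \<Rightarrow> 'a \<Rightarrow> bool"
  assumes edge_ancestral: "E a b \<Longrightarrow> P\<^sup>+\<^sup>+ a b \<or> P\<^sup>+\<^sup>+ b a"
begin

lemma edge_prec_iff_ancestor:
  assumes "parent_first \<rho>" "E a b"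
  shows "prec \<rho> a b \<longleftrightarrow> P\<^sup>+\<^sup>+ a b"
  using edge_ancestral[OF assms(2)] parent_first_ancestor_prec[OF assms(1)] prec_asym assms(1)
  unfolding parent_first_def by metis

lemma earlier_neighbour_ancestor:
  assumes "parent_first \<rho>" "t < l" "l < length \<rho>" "E (\<rho> ! t) (\<rho> ! l)"
  shows "P\<^sup>+\<^sup>+ (\<rho> ! t) (\<rho> ! l)"
proof -
  have "prec \<rho> (\<rho> ! t) (\<rho> ! l)"
    using assms(1-3) prec_nth_iff[of \<rho> t l] unfolding parent_first_def by simp
  then show ?thesis using edge_prec_iff_ancestor[OF assms(1,4)] by simp
qed

lemma ancestors_nth_iff:
  assumes "parent_first \<rho>" "i < length \<rho>" "j < length \<rho>"
    and "P\<^sup>+\<^sup>+ (\<rho> ! i) x" "P\<^sup>+\<^sup>+ (\<rho> ! j) x"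
  shows "P\<^sup>+\<^sup>+ (\<rho> ! i) (\<rho> ! j) \<longleftrightarrow> i < j"
proof
  assume "i < j"
  then have "\<rho> ! i \<noteq> \<rho> ! j" "\<not> P\<^sup>+\<^sup>+ (\<rho> ! j) (\<rho> ! i)"
    using assms(1-3) parent_first_ancestor_nth[OF assms(1)] nth_eq_iff_index_eq
    unfolding parent_first_def by (metis less_irrefl, metis less_asym)
  then show "P\<^sup>+\<^sup>+ (\<rho> ! i) (\<rho> ! j)" using ancestors_chain[OF assms(4,5)] by blast
qed (use parent_first_ancestor_nth[OF assms(1-3)] in blast)

lemma earlier_neighbour_of_descendant:
  assumes "parent_first \<rho>" "k < l" "l < length \<rho>" "P\<^sup>+\<^sup>+ (\<rho> ! k) (\<rho> ! l)"
    and "t < k" "E (\<rho> ! t) (\<rho> ! l)"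
  shows "P\<^sup>+\<^sup>+ (\<rho> ! t) (\<rho> ! k)"
proof -
  have "P\<^sup>+\<^sup>+ (\<rho> ! t) (\<rho> ! l)"
    using earlier_neighbour_ancestor[OF assms(1) _ assms(3,6)] assms(2,5) by simp
  then show ?thesis using ancestors_nth_iff[OF assms(1) _ _ _ assms(4)] assms(2,3,5) by simp
qed

lemma anc_lex_less_of_label_witness:
  assumes \<rho>: "parent_first \<rho>" and kl: "k < l" "l < length \<rho>"
    and early: "\<And>t. t < k \<Longrightarrow> E (\<rho> ! t) (\<rho> ! l) \<Longrightarrow> P\<^sup>+\<^sup>+ (\<rho> ! t) (\<rho> ! k)"
    and t: "t < k" "E (\<rho> ! t) (\<rho> ! l)" "\<not> E (\<rho> ! t) (\<rho> ! k)"
    and agree: "\<forall>t'. t < t' \<and> t' < k \<longrightarrow> (E (\<rho> ! t') (\<rho> ! k) \<longleftrightarrow> E (\<rho> ! t') (\<rho> ! l))"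
  shows "anc_lex_less (\<rho> ! k) (\<lambda>a. E a (\<rho> ! k)) (\<lambda>a. E a (\<rho> ! l))"
  unfolding anc_lex_less_def
proof (intro exI conjI allI impI)
  show anc: "P\<^sup>+\<^sup>+ (\<rho> ! t) (\<rho> ! k)" using early t(1,2) .
  fix a' assume a': "P\<^sup>+\<^sup>+ (\<rho> ! t) a'" "P\<^sup>+\<^sup>+ a' (\<rho> ! k)"
  have "k < length \<rho>" using kl by simp
  then obtain t' where "t' < k" "\<rho> ! t' = a'" by (rule parent_first_ancestor_index[OF \<rho> _ a'(2)])
  moreover from this have "t < t'" using ancestors_nth_iff[OF \<rho> _ _ anc, of t'] t(1) kl a' by simp
  ultimately show "E a' (\<rho> ! k) \<longleftrightarrow> E a' (\<rho> ! l)" using agree by blast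
qed (use t in auto)

lemma label_witness_of_anc_lex_less:
  assumes \<rho>: "parent_first \<rho>" and kl: "k < l" "l < length \<rho>"
    and early: "\<And>t. t < k \<Longrightarrow> E (\<rho> ! t) (\<rho> ! l) \<Longrightarrow> P\<^sup>+\<^sup>+ (\<rho> ! t) (\<rho> ! k)"
    and "anc_lex_less (\<rho> ! k) (\<lambda>a. E a (\<rho> ! k)) (\<lambda>a. E a (\<rho> ! l))"
  obtains t where "t < k" "E (\<rho> ! t) (\<rho> ! l)" "\<not> E (\<rho> ! t) (\<rho> ! k)"
    "\<forall>t'. t < t' \<and> t' < k \<longrightarrow> (E (\<rho> ! t') (\<rho> ! k) \<longleftrightarrow> E (\<rho> ! t') (\<rho> ! l))"
proof -
  obtain a where a: "P\<^sup>+\<^sup>+ a (\<rho> ! k)" "E a (\<rho> ! l)" "\<not> E a (\<rho> ! k)"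
    "\<forall>a'. P\<^sup>+\<^sup>+ a a' \<longrightarrow> P\<^sup>+\<^sup>+ a' (\<rho> ! k) \<longrightarrow> (E a' (\<rho> ! k) \<longleftrightarrow> E a' (\<rho> ! l))"
    using assms(5) unfolding anc_lex_less_def by blast
  have "k < length \<rho>" using kl by simp
  then obtain t where t: "t < k" "\<rho> ! t = a" by (rule parent_first_ancestor_index[OF \<rho> _ a(1)])
  have "E (\<rho> ! t') (\<rho> ! k) \<longleftrightarrow> E (\<rho> ! t') (\<rho> ! l)" if "t < t'" "t' < k" for t'
  proof (rule ccontr)
    assume differ: "\<not> (E (\<rho> ! t') (\<rho> ! k) \<longleftrightarrow> E (\<rho> ! t') (\<rho> ! l))"
    then have "P\<^sup>+\<^sup>+ (\<rho> ! t') (\<rho> ! k)"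
      using early[OF that(2)] earlier_neighbour_ancestor[OF \<rho> that(2) _] kl by auto
    moreover from this have "P\<^sup>+\<^sup>+ a (\<rho> ! t')"
      using ancestors_nth_iff[OF \<rho>, of t t' "\<rho> ! k"] a(1) t that kl by simp
    ultimately show False using a(4) differ by blast
  qed
  then show ?thesis using that t a(2,3) by blast
qed

lemma label_less_iff_anc_lex_less:
  assumes \<rho>: "parent_first \<rho>" and kl: "k < l" "l < length \<rho>" and "\<rho> ! k \<noteq> s" "\<rho> ! l \<noteq> s"
    and early: "\<And>t. t < k \<Longrightarrow> E (\<rho> ! t) (\<rho> ! l) \<Longrightarrow> P\<^sup>+\<^sup>+ (\<rho> ! t) (\<rho> ! k)"
  shows "label_less (lexdfs_label E s \<rho> k (\<rho> ! k)) (lexdfs_label E s \<rho> k (\<rho> ! l)) \<longleftrightarrow>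
    anc_lex_less (\<rho> ! k) (\<lambda>a. E a (\<rho> ! k)) (\<lambda>a. E a (\<rho> ! l))"
  unfolding label_less_lexdfs_label_iff[OF assms(4,5)]
proof
  assume "\<exists>t<k. E (\<rho> ! t) (\<rho> ! l) \<and> \<not> E (\<rho> ! t) (\<rho> ! k) \<and>
    (\<forall>t'. t < t' \<and> t' < k \<longrightarrow> (E (\<rho> ! t') (\<rho> ! k) \<longleftrightarrow> E (\<rho> ! t') (\<rho> ! l)))"
  then show "anc_lex_less (\<rho> ! k) (\<lambda>a. E a (\<rho> ! k)) (\<lambda>a. E a (\<rho> ! l))"
    using anc_lex_less_of_label_witness[OF \<rho> kl early] by blast
next
  assume "anc_lex_less (\<rho> ! k) (\<lambda>a. E a (\<rho> ! k)) (\<lambda>a. E a (\<rho> ! l))"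
  from label_witness_of_anc_lex_less[OF \<rho> kl early this]
  show "\<exists>t<k. E (\<rho> ! t) (\<rho> ! l) \<and> \<not> E (\<rho> ! t) (\<rho> ! k) \<and>
    (\<forall>t'. t < t' \<and> t' < k \<longrightarrow> (E (\<rho> ! t') (\<rho> ! k) \<longleftrightarrow> E (\<rho> ! t') (\<rho> ! l)))"
    by blast
qed

end

section \<open>L-trees\<close>

definition ltree_parent :: "('a \<Rightarrow> 'a \<Rightarrow> bool) \<Rightarrow> 'a list \<Rightarrow> 'a \<Rightarrow> 'a \<Rightarrow> bool" where
  "ltree_parent E \<rho> u v \<longleftrightarrow> (\<exists>j k. j < k \<and> k < length \<rho> \<and> \<rho> ! j = u \<and> \<rho> ! k = v \<and> E v u \<and>
      (\<forall>m. j < m \<and> m < k \<longrightarrow> \<not> E v (\<rho> ! m)))"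

lemma ltree_iff_parent: "ltree E \<rho> x y \<longleftrightarrow> ltree_parent E \<rho> x y \<or> ltree_parent E \<rho> y x"
  unfolding ltree_def ltree_parent_def by blast

lemma ltree_parent_prec: "ltree_parent E \<rho> u v \<Longrightarrow> prec \<rho> u v"
  unfolding ltree_parent_def prec_def by blast

lemma ltree_parent_edge: "ltree_parent E \<rho> u v \<Longrightarrow> E v u"
  unfolding ltree_parent_def by blast

lemma ltree_parent_nth_iff:
  assumes "distinct \<rho>" "j < length \<rho>" "k < length \<rho>"
  shows "ltree_parent E \<rho> (\<rho> ! j) (\<rho> ! k) \<longleftrightarrow>
    j < k \<and> E (\<rho> ! k) (\<rho> ! j) \<and> (\<forall>m. j < m \<and> m < k \<longrightarrow> \<not> E (\<rho> ! k) (\<rho> ! m))"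
proof
  assume "ltree_parent E \<rho> (\<rho> ! j) (\<rho> ! k)"
  then obtain j' k' where "j' < k'" "k' < length \<rho>" "\<rho> ! j' = \<rho> ! j" "\<rho> ! k' = \<rho> ! k"
      "E (\<rho> ! k) (\<rho> ! j)" "\<forall>m. j' < m \<and> m < k' \<longrightarrow> \<not> E (\<rho> ! k) (\<rho> ! m)"
    unfolding ltree_parent_def by blast
  moreover from this have "j' = j" "k' = k"
    using nth_eq_iff_index_eq[OF assms(1)] assms(2,3) by auto
  ultimately show "j < k \<and> E (\<rho> ! k) (\<rho> ! j) \<and> (\<forall>m. j < m \<and> m < k \<longrightarrow> \<not> E (\<rho> ! k) (\<rho> ! m))"
    by blast
qed (use assms(3) in \<open>auto simp: ltree_parent_def\<close>)

lemma ltree_parent_unique: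
  assumes "distinct \<rho>" "ltree_parent E \<rho> u v" "ltree_parent E \<rho> u' v"
  shows "u = u'"
proof -
  obtain j k j' where idx: "j < length \<rho>" "j' < length \<rho>" "k < length \<rho>"
    "\<rho> ! j = u" "\<rho> ! j' = u'" "\<rho> ! k = v"
    using assms(2,3) ltree_parent_prec prec_memD by (metis in_set_conv_nth)
  then have "j < k \<and> E (\<rho> ! k) (\<rho> ! j) \<and> (\<forall>m. j < m \<and> m < k \<longrightarrow> \<not> E (\<rho> ! k) (\<rho> ! m))"
    "j' < k \<and> E (\<rho> ! k) (\<rho> ! j') \<and> (\<forall>m. j' < m \<and> m < k \<longrightarrow> \<not> E (\<rho> ! k) (\<rho> ! m))"
    using assms ltree_parent_nth_iff by metis+
  then have "j = j'" by (meson linorder_neqE_nat)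
  then show ?thesis using idx by simp
qed

lemma ltree_parent_hd:
  assumes "distinct \<rho>"
  shows "\<not> ltree_parent E \<rho> u (hd \<rho>)"
proof
  assume "ltree_parent E \<rho> u (hd \<rho>)"
  then obtain j k where "j < k" "k < length \<rho>" "\<rho> ! k = hd \<rho>"
    unfolding ltree_parent_def by blast
  moreover from this have "hd \<rho> = \<rho> ! 0" by (intro hd_conv_nth) auto
  ultimately show False using nth_eq_iff_index_eq[OF assms, of k 0] by (cases \<rho>) auto
qed

lemma edge_set_ltree: "edge_set (ltree E \<rho>) = (\<lambda>(u, v). {u, v}) ` {(u, v). ltree_parent E \<rho> u v}"
  unfolding edge_set_def ltree_iff_parent by (auto simp: insert_commute)

lemma card_edge_set_ltree:
  assumes "distinct \<rho>"
  shows "card (edge_set (ltree E \<rho>)) = card {v. \<exists>u. ltree_parent E \<rho> u v}"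
proof -
  let ?R = "{(u, v). ltree_parent E \<rho> u v}"
  have "\<not> ltree_parent E \<rho> v u" if "ltree_parent E \<rho> u v" for u v
    using that ltree_parent_prec prec_asym[OF assms] by metis
  then have "inj_on (\<lambda>(u, v). {u, v}) ?R"
    by (intro inj_onI) (auto simp: doubleton_eq_iff)
  moreover have "inj_on snd ?R"
    by (rule inj_onI) (auto dest: ltree_parent_unique[OF assms])
  moreover have "snd ` ?R = {v. \<exists>u. ltree_parent E \<rho> u v}" by force
  ultimately show ?thesis
    unfolding edge_set_ltree by (metis card_image)
qed

lemma ltree_parent_exists:
  assumes "distinct \<rho>" "card (edge_set (ltree E \<rho>)) = length \<rho> - 1" "v \<in> set \<rho>" "v \<noteq> hd \<rho>"
  shows "\<exists>u. ltree_parent E \<rho> u v"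
proof -
  have "{v. \<exists>u. ltree_parent E \<rho> u v} \<subseteq> set \<rho> - {hd \<rho>}"
    using ltree_parent_prec prec_memD ltree_parent_hd[OF assms(1)] by fast
  moreover have "\<rho> \<noteq> []" using assms(3) by auto
  then have "card (set \<rho> - {hd \<rho>}) = length \<rho> - 1"
    using assms(1) by (simp add: distinct_card card_Diff_singleton)
  ultimately have "{v. \<exists>u. ltree_parent E \<rho> u v} = set \<rho> - {hd \<rho>}"
    using assms(1,2) card_edge_set_ltree by (metis card_subset_eq finite_Diff finite_set)
  then show ?thesis using assms(3,4) by blast
qed

lemma simple_graph_sym: "simple_graph V E \<Longrightarrow> E x y \<Longrightarrow> E y x"
  and simple_graph_irrefl: "simple_graph V E \<Longrightarrow> \<not> E x x"
  and simple_graph_edge_in: "simple_graph V E \<Longrightarrow> E x y \<Longrightarrow> x \<in> V \<and> y \<in> V"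
  unfolding simple_graph_def by blast+

locale spanning_ltree =
  fixes V :: "'a set" and E :: "'a \<Rightarrow> 'a \<Rightarrow> bool" and \<rho> :: "'a list"
  assumes graph: "simple_graph V E" and ordering: "vertex_order V \<rho>"
    and spanning: "spanning_tree V E (ltree E \<rho>)"
begin

lemma distinct_order: "distinct \<rho>" and set_order: "set \<rho> = V"
  using ordering unfolding vertex_order_def by auto

lemma finite_ltree_parent: "finite {(u, v). ltree_parent E \<rho> u v}"
proof (rule finite_subset)
  show "{(u, v). ltree_parent E \<rho> u v} \<subseteq> set \<rho> \<times> set \<rho>"
    using ltree_parent_prec prec_memD by fast
qed simp

lemma ltree_ancestor_irrefl: "\<not> (ltree_parent E \<rho>)\<^sup>+\<^sup>+ a a"
proof
  assume "(ltree_parent E \<rho>)\<^sup>+\<^sup>+ a a"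
  then have "prec \<rho> a a" using distinct_order by (rule tranclp_prec) (rule ltree_parent_prec)
  then show False using prec_irrefl[OF distinct_order] by blast
qed

sublocale parent_forest "ltree_parent E \<rho>"
  using finite_ltree_parent ltree_parent_unique[OF distinct_order] ltree_ancestor_irrefl
  by unfold_locales blast+

lemma parent_first_order: "parent_first \<rho>"
  unfolding parent_first_def using distinct_order by (blast intro: ltree_parent_prec)

lemma parent_edge: "ltree_parent E \<rho> u v \<Longrightarrow> E u v"
  using ltree_parent_edge simple_graph_sym[OF graph] by metis

lemma parent_exists:
  assumes "v \<in> V" "v \<noteq> hd \<rho>"
  shows "\<exists>u. ltree_parent E \<rho> u v"
proof -
  have "card V = length \<rho>" using distinct_card[OF distinct_order] set_order by simp
  then show ?thesis
    using ltree_parent_exists[OF distinct_order, of E v] spanning assms set_order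
    unfolding spanning_tree_def by simp
qed

lemma nth_parent:
  assumes "0 < k" "k < length \<rho>"
  obtains j where "j < k" "ltree_parent E \<rho> (\<rho> ! j) (\<rho> ! k)"
    "\<forall>m. j < m \<and> m < k \<longrightarrow> \<not> E (\<rho> ! k) (\<rho> ! m)"
proof -
  have "0 < length \<rho>" using assms(2) by linarith
  then have "\<rho> ! k \<noteq> hd \<rho>"
    using assms(1) nth_eq_iff_index_eq[OF distinct_order assms(2)] hd_conv_nth[of \<rho>] by fastforce
  moreover have "\<rho> ! k \<in> V" using set_order assms(2) by auto
  ultimately obtain u where u: "ltree_parent E \<rho> u (\<rho> ! k)"
    using parent_exists by blast
  then have "u \<in> set \<rho>" using prec_memD[OF ltree_parent_prec[OF u]] by simp
  then obtain j where j: "j < length \<rho>" "\<rho> ! j = u" by (auto simp: in_set_conv_nth)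
  then have "j < k \<and> ltree_parent E \<rho> (\<rho> ! j) (\<rho> ! k) \<and> (\<forall>m. j < m \<and> m < k \<longrightarrow> \<not> E (\<rho> ! k) (\<rho> ! m))"
    using u ltree_parent_nth_iff[OF distinct_order j(1) assms(2)] by simp
  then show ?thesis using that by blast
qed

lemma ltree_parent_nth_eq:
  assumes other: "spanning_ltree V E \<rho>'" and same: "ltree E \<rho>' = ltree E \<rho>" "hd \<rho>' = hd \<rho>"
    and "k < length \<rho>"
  shows "ltree_parent E \<rho>' u (\<rho> ! k) \<longleftrightarrow> ltree_parent E \<rho> u (\<rho> ! k)"
  using assms(4)
proof (induction k arbitrary: u rule: less_induct)
  case (less k)
  interpret other: spanning_ltree V E \<rho>' by (fact other)
  show ?case
  proof (cases "k = 0")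
    case True
    then have "\<rho> ! k = hd \<rho>" using less.prems by (simp add: hd_conv_nth)
    then show ?thesis
      using ltree_parent_hd[OF distinct_order] ltree_parent_hd[OF other.distinct_order] same(2) by metis
  next
    case False
    then obtain j where j: "j < k" "ltree_parent E \<rho> (\<rho> ! j) (\<rho> ! k)"
      using nth_parent less.prems by (metis gr0I)
    have "\<not> ltree_parent E \<rho>' (\<rho> ! k) (\<rho> ! j)"
    proof
      assume kj: "ltree_parent E \<rho>' (\<rho> ! k) (\<rho> ! j)"
      then have "\<rho> ! j \<noteq> hd \<rho>" using ltree_parent_hd[OF other.distinct_order] same(2) by metis
      moreover have "\<rho> ! 0 = hd \<rho>" using less.prems by (cases \<rho>) auto
      ultimately have "j \<noteq> 0" by (cases j) auto
      then obtain i where "ltree_parent E \<rho> (\<rho> ! i) (\<rho> ! j)"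
        using nth_parent[of j] j(1) less.prems by auto
      then have "ltree_parent E \<rho>' (\<rho> ! i) (\<rho> ! j)" using less.IH j(1) less.prems by simp
      then have "ltree_parent E \<rho> (\<rho> ! k) (\<rho> ! j)"
        using other.parent_unique[OF kj] \<open>ltree_parent E \<rho> (\<rho> ! i) (\<rho> ! j)\<close> by metis
      then show False
        using parent_first_ancestor_nth[OF parent_first_order, of k j] j(1) less.prems by auto
    qed
    moreover have "ltree E \<rho>' (\<rho> ! j) (\<rho> ! k)" using j(2) same(1) ltree_iff_parent by metis
    ultimately have "ltree_parent E \<rho>' (\<rho> ! j) (\<rho> ! k)" using ltree_iff_parent by metis
    then show ?thesis using j(2) parent_unique other.parent_unique by metis
  qed
qed

lemma ltree_parent_eq:
  assumes other: "spanning_ltree V E \<rho>'" and "ltree E \<rho>' = ltree E \<rho>" "hd \<rho>' = hd \<rho>"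
  shows "ltree_parent E \<rho>' = ltree_parent E \<rho>"
proof (intro ext)
  fix u v
  have "v \<in> V" if "ltree_parent E \<rho>' u v \<or> ltree_parent E \<rho> u v"
    using that spanning_ltree.set_order[OF other] set_order prec_memD ltree_parent_prec by metis
  then show "ltree_parent E \<rho>' u v = ltree_parent E \<rho> u v"
    using ltree_parent_nth_eq[OF assms] set_order by (metis in_set_conv_nth)
qed

end

locale lexdfs_ltree = spanning_ltree +
  fixes s :: 'a
  assumes lexdfs: "is_lexdfs_order V E s \<rho>"
begin

lemma lexdfs_parent_not_before_neighbour:
  assumes "ltree_parent E \<rho> (\<rho> ! j') (\<rho> ! j)" "j' < j" "m < j" "j \<le> k" "k < length \<rho>"
    and "E (\<rho> ! m) (\<rho> ! k)"
  shows "m \<le> j'"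
proof (rule ccontr)
  assume "\<not> m \<le> j'"
  have rightmost: "\<not> E (\<rho> ! j) (\<rho> ! m')" if "j' < m'" "m' < j" for m'
    using ltree_parent_nth_iff[OF distinct_order, of j' j] assms(1,2,4,5) that by simp
  then have "\<not> E (\<rho> ! m) (\<rho> ! j)"
    using \<open>\<not> m \<le> j'\<close> assms(3) simple_graph_sym[OF graph] by (meson not_le)
  show False
  proof (cases "j = k")
    case True
    then show False using assms(6) \<open>\<not> E (\<rho> ! m) (\<rho> ! j)\<close> by simp
  next
    case False
    then obtain t' where "m < t'" "t' < j" "E (\<rho> ! t') (\<rho> ! j)"
      using lexdfs_order_four_point[OF lexdfs _ _ assms(5) assms(3,6) \<open>\<not> E (\<rho> ! m) (\<rho> ! j)\<close>]
        assms(3,4) by auto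
    moreover have "j' < t'" using \<open>m < t'\<close> \<open>\<not> m \<le> j'\<close> by linarith
    ultimately show False using rightmost simple_graph_sym[OF graph, of "\<rho> ! t'" "\<rho> ! j"] by blast
  qed
qed

text \<open>LexDFS L-trees are normal trees: both ends of every edge are comparable.\<close>
lemma lexdfs_earlier_neighbour_ancestor:
  assumes "m < k" "k < length \<rho>" "E (\<rho> ! m) (\<rho> ! k)"
  shows "(ltree_parent E \<rho>)\<^sup>+\<^sup>+ (\<rho> ! m) (\<rho> ! k)"
proof -
  let ?P = "ltree_parent E \<rho>"
  have "?P\<^sup>*\<^sup>* (\<rho> ! m) (\<rho> ! j)" if "m < j" "j \<le> k" "?P\<^sup>*\<^sup>* (\<rho> ! j) (\<rho> ! k)" for j
    using that
  proof (induction j rule: less_induct)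
    case (less j)
    obtain j' where j': "j' < j" "?P (\<rho> ! j') (\<rho> ! j)"
      using nth_parent[of j] less.prems assms(2) by auto
    have "m \<le> j'"
      using lexdfs_parent_not_before_neighbour[OF j'(2,1) less.prems(1,2) assms(2,3)] .
    then consider "m = j'" | "m < j'" by linarith
    then show ?case
    proof cases
      case 1
      then show ?thesis using j'(2) by blast
    next
      case 2
      have "?P\<^sup>*\<^sup>* (\<rho> ! j') (\<rho> ! k)"
        using j'(2) less.prems(3) by (rule converse_rtranclp_into_rtranclp)
      then have "?P\<^sup>*\<^sup>* (\<rho> ! m) (\<rho> ! j')" using less.IH[OF j'(1) 2] j'(1) less.prems by simp
      then show ?thesis using j'(2) by (rule rtranclp.rtrancl_into_rtrancl)
    qed
  qed
  from this[of k] have "?P\<^sup>*\<^sup>* (\<rho> ! m) (\<rho> ! k)" using assms(1) by simp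
  moreover have "\<rho> ! m \<noteq> \<rho> ! k"
    using assms(1,2) distinct_order nth_eq_iff_index_eq[of \<rho> m k] by auto
  ultimately show ?thesis by (auto dest: rtranclpD)
qed

sublocale normal_forest "ltree_parent E \<rho>" E
proof
  fix a b assume "E a b"
  then obtain i j where ij: "i < length \<rho>" "\<rho> ! i = a" "j < length \<rho>" "\<rho> ! j = b"
    using simple_graph_edge_in[OF graph] set_order by (metis in_set_conv_nth)
  moreover have "i \<noteq> j" using ij \<open>E a b\<close> simple_graph_irrefl[OF graph] by auto
  ultimately consider "i < j" | "j < i" by linarith
  then show "(ltree_parent E \<rho>)\<^sup>+\<^sup>+ a b \<or> (ltree_parent E \<rho>)\<^sup>+\<^sup>+ b a"
    using lexdfs_earlier_neighbour_ancestor ij \<open>E a b\<close> simple_graph_sym[OF graph]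
    by cases auto
qed

lemma descendant_not_anc_lex_less:
  assumes "(ltree_parent E \<rho>)\<^sup>+\<^sup>+ c w"
  shows "\<not> anc_lex_less c (\<lambda>a. E a c) (\<lambda>a. E a w)"
proof -
  obtain k l where kl: "k < length \<rho>" "\<rho> ! k = c" "l < length \<rho>" "\<rho> ! l = w"
    using assms parent_first_ancestor_prec[OF parent_first_order] prec_memD by (metis in_set_conv_nth)
  then have "k < l" using parent_first_ancestor_nth[OF parent_first_order] assms by blast
  show ?thesis
  proof (cases "k = 0")
    case True
    then have "c = hd \<rho>" using kl by (simp add: hd_conv_nth)
    then have "\<not> (ltree_parent E \<rho>)\<^sup>+\<^sup>+ a c" for a
      using ltree_parent_hd[OF distinct_order] by (metis tranclp.cases)
    then show ?thesis unfolding anc_lex_less_def by blast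
  next
    case False
    have "\<rho> ! k \<noteq> s" "\<rho> ! l \<noteq> s"
      using lexdfs_order_nth_neq_start[OF lexdfs, of k] lexdfs_order_nth_neq_start[OF lexdfs, of l]
        False \<open>k < l\<close> kl(1,3) by auto
    with label_less_iff_anc_lex_less[OF parent_first_order \<open>k < l\<close> kl(3)]
      earlier_neighbour_of_descendant[OF parent_first_order \<open>k < l\<close> kl(3)]
      lexdfs_order_label_not_less[OF lexdfs \<open>k < l\<close> kl(3)]
    show ?thesis using assms kl by auto
  qed
qed

end

section \<open>Partition refinement\<close>

lemma refine_Nil [simp]: "refine [] S = []"
  by (simp add: refine_def)

lemma refine_Cons:
  "refine (X # Q) S = (if X \<inter> S \<noteq> {} \<and> X - S \<noteq> {} then [X \<inter> S, X - S] else [X]) @ refine Q S"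
  by (simp add: refine_def)

lemma Union_refine: "\<Union>(set (refine Q S)) = \<Union>(set Q)"
  by (induction Q) (auto simp: refine_Cons)

lemma refine_class_split:
  "X' \<in> set (refine Q S) \<Longrightarrow> \<exists>X\<in>set Q. X' \<subseteq> X \<and> (X' \<subseteq> S \<or> X' \<inter> S = {})"
  by (induction Q) (auto simp: refine_Cons split: if_splits)

lemma prec_refine:
  assumes "prec (refine Q S) X' Y'"
  shows "\<exists>X Y. X' \<subseteq> X \<and> Y' \<subseteq> Y \<and>
    (prec Q X Y \<or> (X = Y \<and> X \<in> set Q \<and> X' \<subseteq> S \<and> Y' \<inter> S = {}))"
  using assms
proof (induction Q)
  case (Cons X Q)
  define C where "C = (if X \<inter> S \<noteq> {} \<and> X - S \<noteq> {} then [X \<inter> S, X - S] else [X])"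
  have "prec C X' Y' \<or> prec (refine Q S) X' Y' \<or> (X' \<in> set C \<and> Y' \<in> set (refine Q S))"
    using Cons.prems by (simp add: refine_Cons C_def prec_append)
  then show ?case
  proof (elim disjE)
    assume "prec C X' Y'"
    then have "X' = X \<inter> S \<and> Y' = X - S"
      unfolding C_def by (auto simp: prec_Cons split: if_splits)
    then show ?thesis by (intro exI[of _ X] exI[of _ X]) auto
  next
    assume "prec (refine Q S) X' Y'"
    then obtain X0 Y0 where "X' \<subseteq> X0" "Y' \<subseteq> Y0"
      "prec Q X0 Y0 \<or> (X0 = Y0 \<and> X0 \<in> set Q \<and> X' \<subseteq> S \<and> Y' \<inter> S = {})"
      using Cons.IH by blast
    then show ?thesis by (intro exI[of _ X0] exI[of _ Y0]) (auto simp: prec_Cons)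
  next
    assume "X' \<in> set C \<and> Y' \<in> set (refine Q S)"
    moreover from this obtain Y where "Y \<in> set Q" "Y' \<subseteq> Y" using refine_class_split by blast
    moreover have "X' \<subseteq> X" using calculation(1) unfolding C_def by (auto split: if_splits)
    ultimately show ?thesis by (intro exI[of _ X] exI[of _ Y]) (auto simp: prec_Cons)
  qed
qed simp

lemma Union_fold_refine: "\<Union>(set (fold (\<lambda>S Q. refine Q S) Ss Q)) = \<Union>(set Q)"
  by (induction Ss arbitrary: Q) (auto simp: Union_refine)

lemma fold_refine_same_class:
  assumes "X \<in> set (fold (\<lambda>S Q. refine Q S) Ss [V])" "x \<in> X" "y \<in> X" "t < length Ss"
  shows "x \<in> Ss ! t \<longleftrightarrow> y \<in> Ss ! t"
  using assms
proof (induction Ss arbitrary: X t rule: rev_induct)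
  case (snoc S Ss)
  have "X \<in> set (refine (fold (\<lambda>S Q. refine Q S) Ss [V]) S)" using snoc.prems(1) by simp
  then obtain X0 where X0: "X0 \<in> set (fold (\<lambda>S Q. refine Q S) Ss [V])" "X \<subseteq> X0"
    "X \<subseteq> S \<or> X \<inter> S = {}"
    using refine_class_split by blast
  show ?case
  proof (cases "t < length Ss")
    case True
    then have "x \<in> Ss ! t \<longleftrightarrow> y \<in> Ss ! t" using snoc.IH[OF X0(1)] X0(2) snoc.prems(2,3) by blast
    then show ?thesis using True by (simp add: nth_append)
  next
    case False
    then have "t = length Ss" using snoc.prems(4) by simp
    then show ?thesis using X0(3) snoc.prems(2,3) by auto
  qed
qed simp

lemma fold_refine_prec:
  assumes "prec (fold (\<lambda>S Q. refine Q S) Ss [V]) X Y" "x \<in> X" "y \<in> Y"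
  shows "\<exists>t<length Ss. x \<in> Ss ! t \<and> y \<notin> Ss ! t \<and> (\<forall>t'<t. x \<in> Ss ! t' \<longleftrightarrow> y \<in> Ss ! t')"
  using assms
proof (induction Ss arbitrary: X Y rule: rev_induct)
  case Nil
  then show ?case by (simp add: prec_Cons)
next
  case (snoc S Ss)
  let ?Q = "fold (\<lambda>S Q. refine Q S) Ss [V]"
  have "prec (refine ?Q S) X Y" using snoc.prems(1) by simp
  from prec_refine[OF this] obtain X0 Y0 where XY0: "X \<subseteq> X0" "Y \<subseteq> Y0"
    "prec ?Q X0 Y0 \<or> (X0 = Y0 \<and> X0 \<in> set ?Q \<and> X \<subseteq> S \<and> Y \<inter> S = {})"
    by blast
  have x: "x \<in> X0" and y: "y \<in> Y0" using XY0(1,2) snoc.prems(2,3) by auto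
  from XY0(3) show ?case
  proof
    assume "prec ?Q X0 Y0"
    from snoc.IH[OF this x y]
    obtain t where "t < length Ss" "x \<in> Ss ! t" "y \<notin> Ss ! t" "\<forall>t'<t. x \<in> Ss ! t' \<longleftrightarrow> y \<in> Ss ! t'"
      by blast
    then show ?thesis by (intro exI[of _ t]) (simp add: nth_append)
  next
    assume split: "X0 = Y0 \<and> X0 \<in> set ?Q \<and> X \<subseteq> S \<and> Y \<inter> S = {}"
    then have "\<forall>t'<length Ss. x \<in> Ss ! t' \<longleftrightarrow> y \<in> Ss ! t'"
      using fold_refine_same_class[of X0 Ss V x y] x y by auto
    moreover have "x \<in> S" "y \<notin> S" using split snoc.prems(2,3) by auto
    ultimately show ?thesis by (intro exI[of _ "length Ss"]) (simp add: nth_append)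
  qed
qed

lemma prec_concat_classes:
  assumes "prec (concat (map (\<lambda>X. filter (\<lambda>x. x \<in> X) \<rho>) Q)) a b"
  shows "(\<exists>X\<in>set Q. a \<in> X \<and> b \<in> X \<and> prec \<rho> a b) \<or> (\<exists>X Y. prec Q X Y \<and> a \<in> X \<and> b \<in> Y)"
  using assms by (induction Q) (auto simp: prec_append prec_filter prec_Cons)

section \<open>BFS and DFS\<open>\<^sup>+\<close> on trees\<close>

context parent_forest
begin

lemma bfs_run_tree_invariant:
  assumes tree_edges: "\<And>u v. H u v \<longleftrightarrow> P u v \<or> P v u" and root: "\<And>u. \<not> P u s"
    and "bfs_run H s vis q"
  shows "distinct vis \<and> s \<in> set vis \<and> (\<forall>v\<in>set vis. H\<^sup>*\<^sup>* s v \<and> (\<forall>u. P u v \<longrightarrow> prec vis u v)) \<and>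
    (\<exists>pre. vis = pre @ q \<and> (\<forall>v\<in>set pre. \<forall>w. H v w \<longrightarrow> w \<in> set vis))"
  using assms(3)
proof induction
  case start
  then show ?case using root by auto
next
  case (step vis u q ns)
  then obtain pre where pre: "vis = pre @ u # q" "\<forall>v\<in>set pre. \<forall>w. H v w \<longrightarrow> w \<in> set vis"
    by blast
  have u: "u \<in> set vis" "H\<^sup>*\<^sup>* s u" using pre(1) step.IH by auto
  have new: "P u v \<and> H\<^sup>*\<^sup>* s v" if "v \<in> set ns" for v
  proof -
    have v: "H u v" "v \<notin> set vis" using that step.hyps(3) by auto
    have "\<not> P v u"
    proof
      assume "P v u"
      then have "prec vis v u" using step.IH u(1) by blast
      then show False using prec_memD[of vis v u] v(2) by simp
    qed
    then show ?thesis using v(1) u(2) tree_edges by (auto intro: rtranclp.rtrancl_into_rtrancl)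
  qed
  have "prec (vis @ ns) u' v" if "v \<in> set (vis @ ns)" "P u' v" for u' v
  proof (cases "v \<in> set vis")
    case True
    then show ?thesis using step.IH that(2) by (simp add: prec_append)
  next
    case False
    then have "u' = u" using that new parent_unique by auto
    then show ?thesis using False that(1) u(1) by (simp add: prec_append)
  qed
  moreover have "\<forall>v\<in>set (pre @ [u]). \<forall>w. H v w \<longrightarrow> w \<in> set (vis @ ns)"
    using pre(2) step.hyps(3) by auto
  ultimately show ?case using step.IH step.hyps(2,3) pre(1) new by auto
qed

lemma bfs_order_tree:
  assumes "\<And>u v. H u v \<longleftrightarrow> P u v \<or> P v u" "\<And>u. \<not> P u s" "bfs_order H s bfs"
  shows "distinct bfs" "set bfs = {v. H\<^sup>*\<^sup>* s v}" "\<And>u v. P u v \<Longrightarrow> v \<in> set bfs \<Longrightarrow> prec bfs u v"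
proof -
  have "bfs_run H s bfs []" using assms(3) unfolding bfs_order_def .
  from bfs_run_tree_invariant[OF assms(1,2) this]
  have inv: "distinct bfs" "s \<in> set bfs" "\<forall>v\<in>set bfs. H\<^sup>*\<^sup>* s v \<and> (\<forall>u. P u v \<longrightarrow> prec bfs u v)"
    "\<forall>v\<in>set bfs. \<forall>w. H v w \<longrightarrow> w \<in> set bfs"
    by auto
  then show "distinct bfs" "\<And>u v. P u v \<Longrightarrow> v \<in> set bfs \<Longrightarrow> prec bfs u v" by auto
  have "v \<in> set bfs" if "H\<^sup>*\<^sup>* s v" for v
    using that by induction (use inv(2,4) in auto)
  then show "set bfs = {v. H\<^sup>*\<^sup>* s v}" using inv(3) by auto
qed

end

definition dfs_plus_step :: "('a \<Rightarrow> 'a \<Rightarrow> bool) \<Rightarrow> 'a list \<Rightarrow> 'a list \<Rightarrow> 'a \<Rightarrow> bool" where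
  "dfs_plus_step H \<tau> vis w \<longleftrightarrow> (\<exists>i<length vis. has_unvisited H vis (vis ! i) \<and>
     (\<forall>k. i < k \<and> k < length vis \<longrightarrow> \<not> has_unvisited H vis (vis ! k)) \<and>
     H (vis ! i) w \<and> w \<notin> set vis \<and>
     (\<forall>w'. H (vis ! i) w' \<and> w' \<notin> set vis \<longrightarrow> w' = w \<or> prec \<tau> w' w))"

lemma dfs_plus_run_iff:
  "dfs_plus_run H \<tau> vis \<longleftrightarrow> \<tau> \<noteq> [] \<and> vis \<noteq> [] \<and> hd vis = last \<tau> \<and>
     (\<forall>k. 0 < k \<and> k < length vis \<longrightarrow> dfs_plus_step H \<tau> (take k vis) (vis ! k))"
proof
  assume "dfs_plus_run H \<tau> vis"
  then show "\<tau> \<noteq> [] \<and> vis \<noteq> [] \<and> hd vis = last \<tau> \<and>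
     (\<forall>k. 0 < k \<and> k < length vis \<longrightarrow> dfs_plus_step H \<tau> (take k vis) (vis ! k))"
  proof induction
    case (step vis i w)
    have "dfs_plus_step H \<tau> vis w"
      unfolding dfs_plus_step_def using step.hyps(2-7) by blast
    then show ?case using step.IH by (auto simp: nth_append less_Suc_eq)
  qed simp
next
  assume "\<tau> \<noteq> [] \<and> vis \<noteq> [] \<and> hd vis = last \<tau> \<and>
     (\<forall>k. 0 < k \<and> k < length vis \<longrightarrow> dfs_plus_step H \<tau> (take k vis) (vis ! k))"
  then show "dfs_plus_run H \<tau> vis"
  proof (induction vis rule: rev_induct)
    case (snoc w vis)
    then have \<tau>: "\<tau> \<noteq> []" and hd: "hd (vis @ [w]) = last \<tau>" and steps:
      "\<And>k. 0 < k \<Longrightarrow> k < length (vis @ [w]) \<Longrightarrow> dfs_plus_step H \<tau> (take k (vis @ [w])) ((vis @ [w]) ! k)"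
      by blast+
    show ?case
    proof (cases "vis = []")
      case True
      then show ?thesis using \<tau> hd dfs_plus_run.start by fastforce
    next
      case False
      have "dfs_plus_step H \<tau> (take k vis) (vis ! k)" if "0 < k" "k < length vis" for k
        using steps[of k] that by (simp add: nth_append)
      then have "dfs_plus_run H \<tau> vis" using snoc.IH \<tau> hd False by simp
      moreover have "dfs_plus_step H \<tau> vis w"
        using steps[of "length vis"] False by simp
      ultimately show ?thesis
        unfolding dfs_plus_step_def by (blast intro: dfs_plus_run.step)
    qed
  qed simp
qed

section \<open>The procedure Ordering\<close>

locale lexdfs_ltree_ordering = lexdfs_ltree V E \<sigma>' s for V E \<sigma>' s +
  fixes \<sigma> bfs :: "'a list"
  assumes vertex_order_\<sigma>: "vertex_order V \<sigma>" and hd_\<sigma>: "hd \<sigma> = s" and start_in_V: "s \<in> V"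
    and same_ltree: "ltree E \<sigma> = ltree E \<sigma>'" and bfs: "bfs_order (ltree E \<sigma>) s bfs"
begin

abbreviation parent :: "'a \<Rightarrow> 'a \<Rightarrow> bool" where "parent \<equiv> ltree_parent E \<sigma>'"

abbreviation \<tau> :: "'a list" where "\<tau> \<equiv> ordering_tau V E s (rev \<sigma>) (rev bfs)"

abbreviation splitters :: "'a set list" where
  "splitters \<equiv> map (\<lambda>v. {w. E v w \<and> prec (rev bfs) w v}) (rev bfs)"

abbreviation classes :: "'a set list" where
  "classes \<equiv> fold (\<lambda>S Q. refine Q S) splitters [V]"

definition backtracks_to :: "nat \<Rightarrow> nat \<Rightarrow> bool" where
  "backtracks_to j k \<longleftrightarrow>
     (\<forall>m l. j < m \<longrightarrow> m < k \<longrightarrow> k \<le> l \<longrightarrow> l < length \<sigma> \<longrightarrow> \<not> parent (\<sigma> ! m) (\<sigma> ! l))"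

definition tau_picks_child :: "nat \<Rightarrow> nat \<Rightarrow> bool" where
  "tau_picks_child j k \<longleftrightarrow>
     (\<forall>l. k < l \<longrightarrow> l < length \<sigma> \<longrightarrow> parent (\<sigma> ! j) (\<sigma> ! l) \<longrightarrow> prec \<tau> (\<sigma> ! l) (\<sigma> ! k))"

sublocale \<sigma>: spanning_ltree V E \<sigma>
  using graph vertex_order_\<sigma> spanning same_ltree by unfold_locales simp_all

lemma parent_eq: "ltree_parent E \<sigma> = parent"
  using ltree_parent_eq[OF \<sigma>.spanning_ltree_axioms same_ltree] hd_\<sigma> lexdfs_order_hd[OF lexdfs start_in_V]
  by simp

lemma parent_first_\<sigma>: "parent_first \<sigma>"
  using \<sigma>.parent_first_order unfolding parent_eq .

lemma tree_iff: "ltree E \<sigma> u v \<longleftrightarrow> parent u v \<or> parent v u"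
  unfolding ltree_iff_parent parent_eq ..

lemma parent_nth_iff:
  "j < length \<sigma> \<Longrightarrow> k < length \<sigma> \<Longrightarrow> parent (\<sigma> ! j) (\<sigma> ! k) \<longleftrightarrow>
    j < k \<and> E (\<sigma> ! k) (\<sigma> ! j) \<and> (\<forall>m. j < m \<and> m < k \<longrightarrow> \<not> E (\<sigma> ! k) (\<sigma> ! m))"
  unfolding parent_eq[symmetric] by (rule ltree_parent_nth_iff[OF \<sigma>.distinct_order])

lemma no_parent_start: "\<not> parent u s"
  using ltree_parent_hd[OF distinct_order] lexdfs_order_hd[OF lexdfs start_in_V] by metis

lemma nth_index:
  assumes "v \<in> V"
  obtains i where "i < length \<sigma>" "\<sigma> ! i = v"
  using assms \<sigma>.set_order by (metis in_set_conv_nth)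

lemma parent_in_V: "parent u v \<Longrightarrow> u \<in> V \<and> v \<in> V"
  using ltree_parent_prec prec_memD set_order by metis

lemma nth_neq_start:
  assumes "0 < k" "k < length \<sigma>"
  shows "\<sigma> ! k \<noteq> s"
proof -
  have "0 < length \<sigma>" using assms(2) by linarith
  then have "s = \<sigma> ! 0" using hd_\<sigma> hd_conv_nth[of \<sigma>] by fastforce
  then show ?thesis using nth_eq_iff_index_eq[OF \<sigma>.distinct_order assms(2) \<open>0 < length \<sigma>\<close>] assms(1) by simp
qed

lemma bfs_parent_first: "parent_first bfs" and set_bfs: "set bfs = V"
proof -
  note bfs_tree = bfs_order_tree[OF tree_iff no_parent_start bfs]
  have "(ltree E \<sigma>)\<^sup>*\<^sup>* s v \<longleftrightarrow> v \<in> V" for v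
  proof
    assume "(ltree E \<sigma>)\<^sup>*\<^sup>* s v"
    then show "v \<in> V"
      by induction (use start_in_V \<sigma>.spanning in \<open>auto simp: spanning_tree_def simple_graph_def\<close>)
  qed (use \<sigma>.spanning start_in_V in \<open>auto simp: spanning_tree_def connected_graph_def\<close>)
  then show "set bfs = V" using bfs_tree(2) by auto
  moreover have "parent u v \<Longrightarrow> v \<in> V" for u v
    using ltree_parent_prec prec_memD set_order by metis
  ultimately show "parent_first bfs"
    unfolding parent_first_def using bfs_tree(1,3) by auto
qed

lemma tau_eq: "\<tau> = rev (s # removeAll s (concat (map (\<lambda>X. filter (\<lambda>x. x \<in> X) \<sigma>) classes)))"
  by (simp add: ordering_tau_def Let_def fold_map comp_def)

lemma set_tau: "set \<tau> = V"
  unfolding tau_eq using Union_fold_refine[of _ "[V]"] start_in_V \<sigma>.set_order by auto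

lemma last_tau: "last \<tau> = s"
  unfolding tau_eq by simp

lemma splitters_nth_iff:
  assumes "t < length bfs"
  shows "z \<in> splitters ! t \<longleftrightarrow> E (rev bfs ! t) z \<and> parent\<^sup>+\<^sup>+ (rev bfs ! t) z"
  using assms edge_prec_iff_ancestor[OF bfs_parent_first] by (auto simp: prec_rev)

lemma rev_bfs_index:
  assumes "v \<in> V"
  obtains t where "t < length bfs" "rev bfs ! t = v"
proof -
  have "v \<in> set (rev bfs)" using assms set_bfs by simp
  then show ?thesis using that unfolding in_set_conv_nth by auto
qed

lemma same_class_adjacency:
  assumes "parent p x" "parent p y" "X \<in> set classes" "x \<in> X" "y \<in> X" "parent\<^sup>+\<^sup>+ a x"
  shows "E a x \<longleftrightarrow> E a y"
proof -
  obtain t where t: "t < length bfs" "rev bfs ! t = a"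
    using rev_bfs_index parent_in_V assms(6) by (metis tranclpD)
  have "parent\<^sup>+\<^sup>+ a y" using assms(6) ancestor_of_child_iff[OF assms(1)] ancestor_of_child_iff[OF assms(2)] by simp
  then show ?thesis
    using fold_refine_same_class[OF assms(3-5), of t] splitters_nth_iff[OF t(1)] t assms(6) by simp
qed

lemma earlier_class_anc_lex_less:
  assumes "parent p x" "parent p y" "prec classes X Y" "x \<in> X" "y \<in> Y"
  shows "anc_lex_less x (\<lambda>a. E a y) (\<lambda>a. E a x)"
proof -
  from fold_refine_prec[OF assms(3-5)] obtain t where t: "t < length bfs" "x \<in> splitters ! t"
    "y \<notin> splitters ! t" and agree: "\<forall>t'<t. x \<in> splitters ! t' \<longleftrightarrow> y \<in> splitters ! t'"
    by auto
  have same_anc: "parent\<^sup>+\<^sup>+ a x \<longleftrightarrow> parent\<^sup>+\<^sup>+ a y" for a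
    using ancestor_of_child_iff[OF assms(1)] ancestor_of_child_iff[OF assms(2)] by simp
  define a where "a = rev bfs ! t"
  have a: "parent\<^sup>+\<^sup>+ a x" "E a x" "\<not> E a y"
    using t same_anc unfolding a_def splitters_nth_iff[OF t(1)] by auto
  have "E a' y \<longleftrightarrow> E a' x" if a': "parent\<^sup>+\<^sup>+ a a'" "parent\<^sup>+\<^sup>+ a' x" for a'
  proof -
    obtain t' where t': "t' < length bfs" "rev bfs ! t' = a'"
      using rev_bfs_index parent_in_V a'(2) by (metis tranclpD)
    have "prec (rev bfs) a' a"
      using parent_first_ancestor_prec[OF bfs_parent_first a'(1)] by (simp add: prec_rev)
    then have "t' < t"
      using prec_nth_iff[of "rev bfs" t' t] bfs_parent_first t(1) t' unfolding a_def parent_first_def by simp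
    then show ?thesis
      using agree t' a'(2) same_anc splitters_nth_iff[OF t'(1)] by auto
  qed
  then show ?thesis unfolding anc_lex_less_def using a by blast
qed

text \<open>Siblings are ordered in \<open>\<tau>\<close> by their adjacency to the common ancestors, compared from the
  deepest one upwards, since the refinement processes vertices in reverse BFS order;
  ties are broken by \<open>\<sigma>\<close>.\<close>
lemma sibling_tau_order:
  assumes "parent p x" "parent p y" "prec \<tau> y x"
  shows "(prec \<sigma> x y \<and> (\<forall>a. parent\<^sup>+\<^sup>+ a x \<longrightarrow> (E a x \<longleftrightarrow> E a y))) \<or>
    anc_lex_less x (\<lambda>a. E a y) (\<lambda>a. E a x)"
proof -
  have "x \<noteq> s" "y \<noteq> s" using assms(1,2) no_parent_start by auto
  then have "prec (concat (map (\<lambda>X. filter (\<lambda>x. x \<in> X) \<sigma>) classes)) x y"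
    using assms(3) unfolding tau_eq
    by (simp add: prec_rev prec_Cons prec_append removeAll_filter_not_eq prec_filter)
  from prec_concat_classes[OF this] show ?thesis
    using same_class_adjacency[OF assms(1,2)] earlier_class_anc_lex_less[OF assms(1,2)] by blast
qed

lemma nth_parent_\<sigma>:
  assumes "0 < k" "k < length \<sigma>"
  obtains j where "j < k" "parent (\<sigma> ! j) (\<sigma> ! k)"
  using \<sigma>.nth_parent[OF assms] unfolding parent_eq by blast

lemma parent_nth_less: "parent (\<sigma> ! j) (\<sigma> ! k) \<Longrightarrow> j < length \<sigma> \<Longrightarrow> k < length \<sigma> \<Longrightarrow> j < k"
  using parent_nth_iff by blast

lemma unvisited_neighbour_iff:
  assumes "j < k" "k \<le> length \<sigma>"
  shows "ltree E \<sigma> (\<sigma> ! j) w \<and> w \<notin> set (take k \<sigma>) \<longleftrightarrow>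
    (\<exists>l. k \<le> l \<and> l < length \<sigma> \<and> w = \<sigma> ! l \<and> parent (\<sigma> ! j) (\<sigma> ! l))"
proof
  assume w: "ltree E \<sigma> (\<sigma> ! j) w \<and> w \<notin> set (take k \<sigma>)"
  then have "w \<in> V" using tree_iff parent_in_V by blast
  then obtain l where l: "l < length \<sigma>" "w = \<sigma> ! l" using nth_index by metis
  then have "k \<le> l" using w nth_in_set_take_iff[OF \<sigma>.distinct_order l(1), of k] by simp
  then have "\<not> parent (\<sigma> ! l) (\<sigma> ! j)" using parent_nth_less[of l j] l(1) assms by auto
  then have "parent (\<sigma> ! j) (\<sigma> ! l)" using w l(2) unfolding tree_iff by blast
  then show "\<exists>l. k \<le> l \<and> l < length \<sigma> \<and> w = \<sigma> ! l \<and> parent (\<sigma> ! j) (\<sigma> ! l)"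
    using l \<open>k \<le> l\<close> by blast
next
  assume "\<exists>l. k \<le> l \<and> l < length \<sigma> \<and> w = \<sigma> ! l \<and> parent (\<sigma> ! j) (\<sigma> ! l)"
  then obtain l where "k \<le> l" "l < length \<sigma>" "w = \<sigma> ! l" "parent (\<sigma> ! j) (\<sigma> ! l)" by blast
  then show "ltree E \<sigma> (\<sigma> ! j) w \<and> w \<notin> set (take k \<sigma>)"
    unfolding tree_iff using nth_in_set_take_iff[OF \<sigma>.distinct_order] by auto
qed

lemma has_unvisited_prefix_iff:
  assumes "m < k" "k \<le> length \<sigma>"
  shows "has_unvisited (ltree E \<sigma>) (take k \<sigma>) (\<sigma> ! m) \<longleftrightarrow>
    (\<exists>l. k \<le> l \<and> l < length \<sigma> \<and> parent (\<sigma> ! m) (\<sigma> ! l))"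
  unfolding has_unvisited_def unvisited_neighbour_iff[OF assms] by blast

text \<open>DFS\<open>\<^sup>+\<close> extends the prefix \<open>take k \<sigma>\<close> by \<open>\<sigma> ! k\<close> iff it backtracks exactly to the parent of
  \<open>\<sigma> ! k\<close> and \<open>\<sigma> ! k\<close> is the unvisited child of that parent that comes last in \<open>\<tau>\<close>.\<close>
lemma dfs_plus_step_prefix_iff:
  assumes "parent (\<sigma> ! j) (\<sigma> ! k)" "j < k" "k < length \<sigma>"
  shows "dfs_plus_step (ltree E \<sigma>) \<tau> (take k \<sigma>) (\<sigma> ! k) \<longleftrightarrow> backtracks_to j k \<and> tau_picks_child j k"
proof -
  let ?vis = "take k \<sigma>"
  have len: "length ?vis = k" and nth_vis: "\<And>i. i < k \<Longrightarrow> ?vis ! i = \<sigma> ! i" using assms(3) by auto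
  have later: "(\<forall>m. j < m \<and> m < k \<longrightarrow> \<not> has_unvisited (ltree E \<sigma>) ?vis (?vis ! m)) \<longleftrightarrow>
      backtracks_to j k"
    unfolding backtracks_to_def using has_unvisited_prefix_iff assms(3) nth_vis by auto
  note children = unvisited_neighbour_iff[OF assms(2) less_imp_le[OF assms(3)]]
  have last_iff: "tau_picks_child j k \<longleftrightarrow>
      (\<forall>w'. ltree E \<sigma> (\<sigma> ! j) w' \<and> w' \<notin> set ?vis \<longrightarrow> w' = \<sigma> ! k \<or> prec \<tau> w' (\<sigma> ! k))"
    unfolding children tau_picks_child_def using assms(3) nth_eq_iff_index_eq[OF \<sigma>.distinct_order] by (auto simp: le_less)
  show ?thesis
  proof
    assume "dfs_plus_step (ltree E \<sigma>) \<tau> ?vis (\<sigma> ! k)"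
    then obtain i where i: "i < k" "\<forall>m. i < m \<and> m < k \<longrightarrow> \<not> has_unvisited (ltree E \<sigma>) ?vis (?vis ! m)"
      "ltree E \<sigma> (\<sigma> ! i) (\<sigma> ! k)"
      "\<forall>w'. ltree E \<sigma> (\<sigma> ! i) w' \<and> w' \<notin> set ?vis \<longrightarrow> w' = \<sigma> ! k \<or> prec \<tau> w' (\<sigma> ! k)"
      unfolding dfs_plus_step_def len using nth_vis by auto
    have "\<not> parent (\<sigma> ! k) (\<sigma> ! i)" using parent_nth_less[of k i] i(1) assms(3) by auto
    then have "parent (\<sigma> ! i) (\<sigma> ! k)" using i(3) unfolding tree_iff by blast
    then have "\<sigma> ! i = \<sigma> ! j" using parent_unique assms(1) by blast
    then have "i = j" using nth_eq_iff_index_eq[OF \<sigma>.distinct_order] i(1) assms(2,3) by simp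
    then show "backtracks_to j k \<and> tau_picks_child j k" using later last_iff i(2,4) by blast
  next
    assume "backtracks_to j k \<and> tau_picks_child j k"
    moreover have "ltree E \<sigma> (\<sigma> ! j) (\<sigma> ! k) \<and> \<sigma> ! k \<notin> set ?vis"
      unfolding children using assms(1,3) by blast
    moreover from this have "has_unvisited (ltree E \<sigma>) ?vis (?vis ! j)"
      using nth_vis[OF assms(2)] unfolding has_unvisited_def by auto
    ultimately show "dfs_plus_step (ltree E \<sigma>) \<tau> ?vis (\<sigma> ! k)"
      unfolding dfs_plus_step_def len using assms(2) later last_iff nth_vis[OF assms(2)]
      by (intro exI[of _ j]) auto
  qed
qed

lemma ordering_output_iff_steps:
  "dfs_plus_output (ltree E \<sigma>) \<tau> \<sigma> \<longleftrightarrow>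
    (\<forall>k. 0 < k \<and> k < length \<sigma> \<longrightarrow> dfs_plus_step (ltree E \<sigma>) \<tau> (take k \<sigma>) (\<sigma> ! k))"
proof -
  have "\<tau> \<noteq> []" "\<sigma> \<noteq> []" using set_tau \<sigma>.set_order start_in_V by auto
  moreover have "\<not> has_unvisited (ltree E \<sigma>) \<sigma> u" for u
    unfolding has_unvisited_def tree_iff using ltree_parent_prec prec_memD set_order \<sigma>.set_order by metis
  ultimately show ?thesis
    unfolding dfs_plus_output_def dfs_plus_run_iff using hd_\<sigma> last_tau by simp
qed

lemma lexdfs_no_late_child:
  assumes lexdfs_\<sigma>: "is_lexdfs_order V E s \<sigma>" and "parent (\<sigma> ! j) (\<sigma> ! k)"
    and "j < m" "m < k" "k \<le> l" "l < length \<sigma>"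
  shows "\<not> parent (\<sigma> ! m) (\<sigma> ! l)"
proof
  assume ml: "parent (\<sigma> ! m) (\<sigma> ! l)"
  have rightmost: "\<not> E (\<sigma> ! k) (\<sigma> ! t)" if "j < t" "t < k" for t
    using assms(2-6) parent_nth_iff[of j k] that by simp
  have "\<sigma> ! m \<noteq> \<sigma> ! j" using assms(3-6) nth_eq_iff_index_eq[OF \<sigma>.distinct_order, of m j] by simp
  then have "k \<noteq> l" using ml assms(2) parent_unique by blast
  then have "0 < k" "k < l" using assms(3-5) by auto
  moreover have "\<not> E (\<sigma> ! m) (\<sigma> ! k)" using rightmost[OF assms(3,4)] simple_graph_sym[OF graph] by blast
  ultimately obtain t' where "m < t'" "t' < k" "E (\<sigma> ! t') (\<sigma> ! k)"
    by (rule lexdfs_order_four_point[OF lexdfs_\<sigma> _ _ assms(6,4) parent_edge[OF ml]])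
  then show False using rightmost[of t'] assms(3) simple_graph_sym[OF graph] by auto
qed

lemma lexdfs_last_child_in_tau:
  assumes lexdfs_\<sigma>: "is_lexdfs_order V E s \<sigma>" and "parent (\<sigma> ! j) (\<sigma> ! k)" "parent (\<sigma> ! j) (\<sigma> ! l)"
    and "k < l" "l < length \<sigma>"
  shows "prec \<tau> (\<sigma> ! l) (\<sigma> ! k)"
proof (rule ccontr)
  assume "\<not> prec \<tau> (\<sigma> ! l) (\<sigma> ! k)"
  have "k < length \<sigma>" using assms(4,5) by simp
  then have "\<sigma> ! k \<noteq> \<sigma> ! l" using nth_eq_iff_index_eq[OF \<sigma>.distinct_order _ assms(5)] assms(4) by simp
  moreover have "\<sigma> ! k \<in> set \<tau>" "\<sigma> ! l \<in> set \<tau>"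
    using nth_mem[of k \<sigma>] nth_mem[of l \<sigma>] assms(4,5) unfolding set_tau \<sigma>.set_order by simp_all
  ultimately have "prec \<tau> (\<sigma> ! k) (\<sigma> ! l)"
    using prec_total[of "\<sigma> ! k" \<tau> "\<sigma> ! l"] \<open>\<not> prec \<tau> (\<sigma> ! l) (\<sigma> ! k)\<close> by simp
  moreover have "\<not> prec \<sigma> (\<sigma> ! l) (\<sigma> ! k)" using prec_nth_iff[OF \<sigma>.distinct_order] assms(4,5) by simp
  ultimately have "anc_lex_less (\<sigma> ! l) (\<lambda>a. E a (\<sigma> ! k)) (\<lambda>a. E a (\<sigma> ! l))"
    using sibling_tau_order[OF assms(3,2)] by blast
  then have less: "anc_lex_less (\<sigma> ! k) (\<lambda>a. E a (\<sigma> ! k)) (\<lambda>a. E a (\<sigma> ! l))"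
    using anc_lex_less_siblings[OF assms(2,3)] by simp
  have early: "parent\<^sup>+\<^sup>+ (\<sigma> ! t) (\<sigma> ! k)" if "t < k" "E (\<sigma> ! t) (\<sigma> ! l)" for t
  proof -
    have "parent\<^sup>+\<^sup>+ (\<sigma> ! t) (\<sigma> ! l)"
      using earlier_neighbour_ancestor[OF parent_first_\<sigma> _ assms(5) that(2)] that(1) assms(4) by simp
    then show ?thesis
      unfolding ancestor_of_child_iff[OF assms(2)] ancestor_of_child_iff[OF assms(3)] .
  qed
  have "\<sigma> ! k \<noteq> s" "\<sigma> ! l \<noteq> s" using assms(2,3) no_parent_start by auto
  from label_less_iff_anc_lex_less[OF parent_first_\<sigma> assms(4,5) this early] less
  have "label_less (lexdfs_label E s \<sigma> k (\<sigma> ! k)) (lexdfs_label E s \<sigma> k (\<sigma> ! l))" by simp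
  then show False using lexdfs_order_label_not_less[OF lexdfs_\<sigma> assms(4,5)] by simp
qed

lemma no_late_ancestor:
  assumes backtrack: "backtracks_to j k"
    and "j < m" "m < k" "k \<le> l" "l < length \<sigma>"
  shows "\<not> parent\<^sup>+\<^sup>+ (\<sigma> ! m) (\<sigma> ! l)"
proof -
  have "\<not> (j < m \<and> m < k)" if "parent\<^sup>+\<^sup>+ u (\<sigma> ! l)" "u = \<sigma> ! m" "m < length \<sigma>" for u m
    using that
  proof (induction arbitrary: m rule: converse_tranclp_induct)
    case (base u)
    then show ?case using backtrack assms(4,5) unfolding backtracks_to_def by blast
  next
    case (step u z)
    obtain i where i: "i < length \<sigma>" "\<sigma> ! i = z" using parent_in_V[OF step.hyps(1)] nth_index by blast
    have "m < i" using parent_nth_less[of m i] step.hyps(1) step.prems i by simp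
    show ?case
    proof (cases "i < k")
      case True
      then show ?thesis using step.IH[of i] i \<open>m < i\<close> by simp
    next
      case False
      then show ?thesis
        using backtrack step.hyps(1) step.prems i unfolding backtracks_to_def by (metis not_less)
    qed
  qed
  from this[of "\<sigma> ! m" m] show ?thesis using assms(2-5) by auto
qed

lemma backtrack_earlier_neighbour:
  assumes backtrack: "backtracks_to j k"
    and "k \<le> l" "l < length \<sigma>" "t < k" "E (\<sigma> ! t) (\<sigma> ! l)"
  shows "parent\<^sup>+\<^sup>+ (\<sigma> ! t) (\<sigma> ! l) \<and> t \<le> j"
proof
  show anc: "parent\<^sup>+\<^sup>+ (\<sigma> ! t) (\<sigma> ! l)"
    using earlier_neighbour_ancestor[OF parent_first_\<sigma> _ assms(3,5)] assms(2,4) by simp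
  show "t \<le> j"
  proof (rule ccontr)
    assume "\<not> t \<le> j"
    then show False using no_late_ancestor[OF backtrack _ assms(4,2,3)] anc by simp
  qed
qed

lemma backtrack_child_towards:
  assumes backtrack: "backtracks_to j k"
    and "j < k" "k \<le> l" "l < length \<sigma>" "parent\<^sup>+\<^sup>+ (\<sigma> ! j) (\<sigma> ! l)"
  obtains lc where "k \<le> lc" "lc < length \<sigma>" "parent (\<sigma> ! j) (\<sigma> ! lc)" "parent\<^sup>*\<^sup>* (\<sigma> ! lc) (\<sigma> ! l)"
proof -
  obtain c where pc: "parent (\<sigma> ! j) c" and cw: "parent\<^sup>*\<^sup>* c (\<sigma> ! l)"
    using tranclpD[OF assms(5)] by blast
  then obtain lc where lc: "lc < length \<sigma>" "\<sigma> ! lc = c" using parent_in_V nth_index by metis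
  have "j < lc" using parent_nth_less[of j lc] pc lc assms(2-4) by simp
  have "k \<le> lc"
  proof (rule ccontr)
    assume "\<not> k \<le> lc"
    then have "c \<noteq> \<sigma> ! l" using lc assms(3,4) nth_eq_iff_index_eq[OF \<sigma>.distinct_order] by fastforce
    then have "parent\<^sup>+\<^sup>+ c (\<sigma> ! l)" using rtranclpD[OF cw] by blast
    then show False
      using no_late_ancestor[OF backtrack \<open>j < lc\<close> _ assms(3,4)] lc \<open>\<not> k \<le> lc\<close> by simp
  qed
  then show ?thesis using that lc pc cw by blast
qed

lemma backtrack_not_anc_lex_less:
  assumes "parent p x" "parent p c" "parent\<^sup>*\<^sup>* c w" "x \<noteq> w"
    and last: "c \<noteq> x \<Longrightarrow> prec \<tau> c x"
  shows "\<not> anc_lex_less x (\<lambda>a. E a x) (\<lambda>a. E a w)"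
proof (cases "c = x")
  case True
  then have "parent\<^sup>+\<^sup>+ x w" using rtranclpD[OF assms(3)] assms(4) by blast
  then show ?thesis by (rule descendant_not_anc_lex_less)
next
  case False
  from sibling_tau_order[OF assms(1,2) last[OF False]]
  have "\<not> anc_lex_less x (\<lambda>a. E a x) (\<lambda>a. E a c)"
  proof
    assume "prec \<sigma> x c \<and> (\<forall>a. parent\<^sup>+\<^sup>+ a x \<longrightarrow> (E a x \<longleftrightarrow> E a c))"
    then show ?thesis unfolding anc_lex_less_def by blast
  qed (rule anc_lex_less_asym)
  moreover have "\<not> anc_lex_less x (\<lambda>a. E a c) (\<lambda>a. E a w)"
  proof (cases "c = w")
    case True
    then show ?thesis unfolding anc_lex_less_def by blast
  next
    case False
    then have "parent\<^sup>+\<^sup>+ c w" using rtranclpD[OF assms(3)] by blast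
    then show ?thesis
      using descendant_not_anc_lex_less[of c w] anc_lex_less_siblings[OF assms(2,1)] by simp
  qed
  ultimately show ?thesis by (rule not_anc_lex_less_trans)
qed

lemma backtrack_neighbour_ancestor:
  assumes px: "parent (\<sigma> ! j) (\<sigma> ! k)" and "j < k" "k \<le> l" "l < length \<sigma>"
    and backtrack: "backtracks_to j k"
    and "j < lc" "lc < length \<sigma>" "parent (\<sigma> ! j) (\<sigma> ! lc)" "parent\<^sup>*\<^sup>* (\<sigma> ! lc) (\<sigma> ! l)"
    and "t < k" "E (\<sigma> ! t) (\<sigma> ! l)"
  shows "parent\<^sup>+\<^sup>+ (\<sigma> ! t) (\<sigma> ! k)"
proof (cases "t = j")
  case True
  then show ?thesis using px by auto
next
  case False
  have t: "parent\<^sup>+\<^sup>+ (\<sigma> ! t) (\<sigma> ! l)" "t < j"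
    using backtrack_earlier_neighbour[OF backtrack assms(3,4,10,11)] False by auto
  moreover have "\<sigma> ! t \<noteq> \<sigma> ! lc" "\<not> parent\<^sup>+\<^sup>+ (\<sigma> ! lc) (\<sigma> ! t)"
    using t(2) assms(2-4,6,7) nth_eq_iff_index_eq[OF \<sigma>.distinct_order]
      parent_first_ancestor_nth[OF parent_first_\<sigma>, of lc t] by auto
  ultimately have "\<sigma> ! t = \<sigma> ! j \<or> parent\<^sup>+\<^sup>+ (\<sigma> ! t) (\<sigma> ! j)"
    using ancestor_through_child[OF assms(8,9)] by blast
  then show ?thesis unfolding ancestor_of_child_iff[OF px] .
qed

lemma backtrack_label_not_less:
  assumes px: "parent (\<sigma> ! j) (\<sigma> ! k)" and "j < k" "k < l" "l < length \<sigma>"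
    and backtrack: "backtracks_to j k"
    and last: "tau_picks_child j k"
  shows "\<not> label_less (lexdfs_label E s \<sigma> k (\<sigma> ! k)) (lexdfs_label E s \<sigma> k (\<sigma> ! l))"
proof
  define x w p where "x = \<sigma> ! k" and "w = \<sigma> ! l" and "p = \<sigma> ! j"
  assume less: "label_less (lexdfs_label E s \<sigma> k x) (lexdfs_label E s \<sigma> k w)"
  have kn: "k < length \<sigma>" using assms(3,4) by simp
  have ns: "x \<noteq> s" "w \<noteq> s"
    using px no_parent_start nth_neq_start[of l] assms(3,4) unfolding x_def w_def by auto
  obtain t where
    t: "t < k" "E (\<sigma> ! t) w" "\<not> E (\<sigma> ! t) x"
    and agree: "\<forall>t'. t < t' \<and> t' < k \<longrightarrow> (E (\<sigma> ! t') x \<longleftrightarrow> E (\<sigma> ! t') w)"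
    using less[unfolded label_less_lexdfs_label_iff[OF ns]] by blast
  note early = backtrack_earlier_neighbour[OF backtrack less_imp_le[OF assms(3)] assms(4), folded w_def]
  have "t < j"
    using early[OF t(1,2)] t(3) parent_edge[OF px] unfolding x_def p_def
    by (metis le_neq_implies_less)
  then have "E p w" using agree[rule_format, of j] assms(2) parent_edge[OF px] unfolding x_def p_def by simp
  then have "parent\<^sup>+\<^sup>+ p w" using early[of j] assms(2) unfolding p_def by simp
  then obtain lc c where lc: "k \<le> lc" "lc < length \<sigma>" "\<sigma> ! lc = c"
    and pc: "parent p c" and cw: "parent\<^sup>*\<^sup>* c w"
    using backtrack_child_towards[OF backtrack assms(2) less_imp_le[OF assms(3)] assms(4)]
    unfolding p_def w_def by metis
  have "j < lc" using lc assms(2) by simp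
  have "\<not> anc_lex_less x (\<lambda>a. E a x) (\<lambda>a. E a w)"
  proof (rule backtrack_not_anc_lex_less[OF px[folded x_def p_def] pc cw])
    show "x \<noteq> w" using assms(3,4) nth_eq_iff_index_eq[OF \<sigma>.distinct_order kn] unfolding x_def w_def by simp
    show "prec \<tau> c x" if "c \<noteq> x"
      using last \<open>k \<le> lc\<close> lc that pc unfolding x_def p_def tau_picks_child_def
      by (metis le_neq_implies_less)
  qed
  moreover have "parent\<^sup>+\<^sup>+ (\<sigma> ! t') x" if "t' < k" "E (\<sigma> ! t') w" for t'
    using backtrack_neighbour_ancestor[OF px assms(2) less_imp_le[OF assms(3)] assms(4) backtrack
        \<open>j < lc\<close> lc(2)] lc pc cw that
    unfolding x_def w_def p_def by simp
  ultimately show False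
    using label_less_iff_anc_lex_less[OF parent_first_\<sigma> assms(3,4)] less ns
    unfolding x_def w_def by blast
qed

lemma ordering_output_iff_lexdfs: "dfs_plus_output (ltree E \<sigma>) \<tau> \<sigma> \<longleftrightarrow> is_lexdfs_order V E s \<sigma>"
  unfolding ordering_output_iff_steps
proof (intro iffI allI impI)
  assume steps: "\<forall>k. 0 < k \<and> k < length \<sigma> \<longrightarrow> dfs_plus_step (ltree E \<sigma>) \<tau> (take k \<sigma>) (\<sigma> ! k)"
  show "is_lexdfs_order V E s \<sigma>"
  proof (rule is_lexdfs_orderI[OF vertex_order_\<sigma> hd_\<sigma>])
    fix k l assume kl: "0 < k" "k < l" "l < length \<sigma>"
    obtain j where j: "j < k" "parent (\<sigma> ! j) (\<sigma> ! k)" using nth_parent_\<sigma>[of k] kl by auto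
    with steps kl show "\<not> label_less (lexdfs_label E s \<sigma> k (\<sigma> ! k)) (lexdfs_label E s \<sigma> k (\<sigma> ! l))"
      using dfs_plus_step_prefix_iff[OF j(2,1)] backtrack_label_not_less[OF j(2,1) kl(2,3)] by auto
  qed
next
  fix k assume lexdfs_\<sigma>: "is_lexdfs_order V E s \<sigma>" and k: "0 < k \<and> k < length \<sigma>"
  obtain j where j: "j < k" "parent (\<sigma> ! j) (\<sigma> ! k)" using nth_parent_\<sigma>[of k] k by auto
  then show "dfs_plus_step (ltree E \<sigma>) \<tau> (take k \<sigma>) (\<sigma> ! k)"
    unfolding dfs_plus_step_prefix_iff[OF j(2,1) conjunct2[OF k]]
    unfolding backtracks_to_def tau_picks_child_def
    using lexdfs_no_late_child[OF lexdfs_\<sigma> j(2)] lexdfs_last_child_in_tau[OF lexdfs_\<sigma> j(2)] by blast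
qed

end

theorem lemma11:
  fixes V :: "'a set" and E T :: "'a \<Rightarrow> 'a \<Rightarrow> bool" and s :: 'a and \<sigma> :: "'a list"
  assumes "simple_graph V E" and "connected_graph V E" and "s \<in> V"
    and "spanning_tree V E T"
    and "\<exists>\<sigma>'. is_lexdfs_order V E s \<sigma>' \<and> T = ltree E \<sigma>'"
    and "vertex_order V \<sigma>" and "hd \<sigma> = s" and "T = ltree E \<sigma>"
  shows "\<forall>bfs. bfs_order T s bfs \<longrightarrow>
           (ordering_outputs V E T s (rev \<sigma>) bfs \<sigma> \<longleftrightarrow> is_lexdfs_order V E s \<sigma>)"
proof (intro allI impI)
  fix bfs assume "bfs_order T s bfs"
  obtain \<sigma>' where "is_lexdfs_order V E s \<sigma>'" "T = ltree E \<sigma>'" using assms(5) by blast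
  then interpret lexdfs_ltree_ordering V E \<sigma>' s \<sigma> bfs
    using assms \<open>bfs_order T s bfs\<close>
    by unfold_locales (auto simp: is_lexdfs_order_def)
  show "ordering_outputs V E T s (rev \<sigma>) bfs \<sigma> \<longleftrightarrow> is_lexdfs_order V E s \<sigma>"
    unfolding ordering_outputs_def assms(8) by (rule ordering_output_iff_lexdfs)
qed

end
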